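(* Let $\mathfrak{g}$ be a finite-dimensional non-abelian nilpotent complex Lie algebra. Then there is a submultiplicative prenorm on the universal enveloping algebra $U(\mathfrak{g})$ such that the corresponding completion is not a PI-algebra.
   Context: A submultiplicative prenorm on $U(\mathfrak{g})$ is a seminorm $p$ with $p(ab)\le p(a)p(b)$; the completion is the Banach algebra obtained by completing $U(\mathfrak{g})/\{a:p(a)=0\}$. An associative algebra is a PI-algebra if there is a nonzero non-commutative polynomial $p$ in finitely many variables with $p(a_1,\ldots,a_n)=0$ for all elements $a_i$ of the algebra. *)

theory Defs
  imports Complex_Main
begin

text \<open>A complex Lie algebra of dimension n is given by its structure constants
  c i j k (i,j,k < n) w.r.t. a basis e_0..e_(n-1):  [e_i,e_j] = sum_k c i j k e_k.
  Vectors are functions nat => complex (only coordinates < n matter).\<close>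

definition lie_br :: "(nat \<Rightarrow> nat \<Rightarrow> nat \<Rightarrow> complex) \<Rightarrow> nat \<Rightarrow>
    (nat \<Rightarrow> complex) \<Rightarrow> (nat \<Rightarrow> complex) \<Rightarrow> (nat \<Rightarrow> complex)" where
  "lie_br c n u v = (\<lambda>k. if k < n then (\<Sum>i<n. \<Sum>j<n. u i * v j * c i j k) else 0)"

definition is_lie_algebra :: "(nat \<Rightarrow> nat \<Rightarrow> nat \<Rightarrow> complex) \<Rightarrow> nat \<Rightarrow> bool" where
  "is_lie_algebra c n \<longleftrightarrow>
     (\<forall>u. lie_br c n u u = (\<lambda>_. 0)) \<and>
     (\<forall>u v w. (\<lambda>k. lie_br c n u (lie_br c n v w) k + lie_br c n v (lie_br c n w u) k
                   + lie_br c n w (lie_br c n u v) k) = (\<lambda>_. 0))"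

text \<open>Nested brackets [v1,[v2,...,[vm,x]...]]; these span the lower central series term g^(m+1).\<close>
fun nest_br :: "(nat \<Rightarrow> nat \<Rightarrow> nat \<Rightarrow> complex) \<Rightarrow> nat \<Rightarrow> (nat \<Rightarrow> complex) \<Rightarrow>
    (nat \<Rightarrow> complex) list \<Rightarrow> (nat \<Rightarrow> complex)" where
  "nest_br c n x [] = x"
| "nest_br c n x (v # vs) = lie_br c n v (nest_br c n x vs)"

definition lie_nilpotent :: "(nat \<Rightarrow> nat \<Rightarrow> nat \<Rightarrow> complex) \<Rightarrow> nat \<Rightarrow> bool" where
  "lie_nilpotent c n \<longleftrightarrow>
     (\<exists>m. \<forall>x us. length us = Suc m \<longrightarrow> nest_br c n x us = (\<lambda>_. 0))"

definition lie_abelian :: "(nat \<Rightarrow> nat \<Rightarrow> nat \<Rightarrow> complex) \<Rightarrow> nat \<Rightarrow> bool" where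
  "lie_abelian c n \<longleftrightarrow> (\<forall>u v. lie_br c n u v = (\<lambda>_. 0))"

text \<open>Elements of the free associative C-algebra on generators indexed by nat are finitely
  supported functions from words (nat list) to complex.\<close>

type_synonym fa = "nat list \<Rightarrow> complex"

definition FA :: "nat \<Rightarrow> fa set" where
  "FA n = {a. finite {w. a w \<noteq> 0} \<and> (\<forall>w. a w \<noteq> 0 \<longrightarrow> set w \<subseteq> {..<n})}"

definition fa_add :: "fa \<Rightarrow> fa \<Rightarrow> fa" where
  "fa_add a b = (\<lambda>w. a w + b w)"

definition fa_diff :: "fa \<Rightarrow> fa \<Rightarrow> fa" where
  "fa_diff a b = (\<lambda>w. a w - b w)"

definition fa_scale :: "complex \<Rightarrow> fa \<Rightarrow> fa" where
  "fa_scale z a = (\<lambda>w. z * a w)"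

definition fa_mult :: "fa \<Rightarrow> fa \<Rightarrow> fa" where
  "fa_mult a b = (\<lambda>w. \<Sum>i\<le>length w. a (take i w) * b (drop i w))"

definition fa_one :: fa where
  "fa_one = (\<lambda>w. if w = [] then 1 else 0)"

definition fa_gen :: "nat \<Rightarrow> fa" where
  "fa_gen i = (\<lambda>w. if w = [i] then 1 else 0)"

definition ue_rel :: "(nat \<Rightarrow> nat \<Rightarrow> nat \<Rightarrow> complex) \<Rightarrow> nat \<Rightarrow> nat \<Rightarrow> nat \<Rightarrow> fa" where
  "ue_rel c n i j = fa_diff (fa_diff (fa_mult (fa_gen i) (fa_gen j)) (fa_mult (fa_gen j) (fa_gen i)))
                      (\<lambda>w. \<Sum>k<n. c i j k * fa_gen k w)"

text \<open>Two-sided ideal of the free algebra FA n generated by the relations; U(g) = FA n / ue_ideal.\<close>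
inductive_set ue_ideal :: "(nat \<Rightarrow> nat \<Rightarrow> nat \<Rightarrow> complex) \<Rightarrow> nat \<Rightarrow> fa set"
  for c :: "nat \<Rightarrow> nat \<Rightarrow> nat \<Rightarrow> complex" and n :: nat where
  rel: "i < n \<Longrightarrow> j < n \<Longrightarrow> ue_rel c n i j \<in> ue_ideal c n"
| zero: "(\<lambda>_. 0) \<in> ue_ideal c n"
| add: "a \<in> ue_ideal c n \<Longrightarrow> b \<in> ue_ideal c n \<Longrightarrow> fa_add a b \<in> ue_ideal c n"
| mult_left: "a \<in> FA n \<Longrightarrow> b \<in> ue_ideal c n \<Longrightarrow> fa_mult a b \<in> ue_ideal c n"
| mult_right: "a \<in> FA n \<Longrightarrow> b \<in> ue_ideal c n \<Longrightarrow> fa_mult b a \<in> ue_ideal c n"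

text \<open>A submultiplicative prenorm on U(g), pulled back to FA n: a seminorm on FA n which is
  constant on cosets of the ideal (i.e. well-defined on the quotient U(g)) and submultiplicative.\<close>
definition ue_prenorm :: "(nat \<Rightarrow> nat \<Rightarrow> nat \<Rightarrow> complex) \<Rightarrow> nat \<Rightarrow> (fa \<Rightarrow> real) \<Rightarrow> bool" where
  "ue_prenorm c n p \<longleftrightarrow>
     (\<forall>a\<in>FA n. \<forall>b\<in>FA n. fa_diff a b \<in> ue_ideal c n \<longrightarrow> p a = p b) \<and>
     (\<forall>a\<in>FA n. \<forall>b\<in>FA n. p (fa_add a b) \<le> p a + p b) \<and>
     (\<forall>a\<in>FA n. \<forall>z. p (fa_scale z a) = cmod z * p a) \<and>
     (\<forall>a\<in>FA n. \<forall>b\<in>FA n. p (fa_mult a b) \<le> p a * p b)"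

text \<open>The completion of U(g)/ker p consists of classes of p-Cauchy sequences modulo p-null
  sequences, with pointwise operations.\<close>
definition p_cauchy :: "nat \<Rightarrow> (fa \<Rightarrow> real) \<Rightarrow> (nat \<Rightarrow> fa) \<Rightarrow> bool" where
  "p_cauchy n p s \<longleftrightarrow> (\<forall>k. s k \<in> FA n) \<and>
     (\<forall>e>0. \<exists>N. \<forall>k\<ge>N. \<forall>l\<ge>N. p (fa_diff (s k) (s l)) < e)"

text \<open>Non-commutative polynomials in variables nat are elements of the free algebra
  (finitely supported functions on words); evaluation in FA.\<close>
fun fa_prod :: "fa list \<Rightarrow> fa" where
  "fa_prod [] = fa_one"
| "fa_prod (x # xs) = fa_mult x (fa_prod xs)"

definition nc_eval :: "fa \<Rightarrow> (nat \<Rightarrow> fa) \<Rightarrow> fa" where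
  "nc_eval P x = (\<lambda>w. \<Sum>v\<in>{v. P v \<noteq> 0}. P v * fa_prod (map x v) w)"

text \<open>The completion is a PI-algebra: there is a nonzero nc polynomial P such that
  P(x_1,...,x_m) = 0 for all elements of the completion, i.e. evaluating P pointwise on
  Cauchy sequences gives a null sequence.\<close>
definition completion_PI :: "nat \<Rightarrow> (fa \<Rightarrow> real) \<Rightarrow> bool" where
  "completion_PI n p \<longleftrightarrow>
     (\<exists>P. finite {v. P v \<noteq> 0} \<and> P \<noteq> (\<lambda>_. 0) \<and>
        (\<forall>s :: nat \<Rightarrow> nat \<Rightarrow> fa. (\<forall>i. p_cauchy n p (s i)) \<longrightarrow>
            ((\<lambda>k. p (nc_eval P (\<lambda>i. s i k))) \<longlonglongrightarrow> 0)))"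

end

theory Submission
  imports Defs
begin

(* Let p be the quotient of the l1-norm on the free algebra modulo the defining ideal of U(g);
   it is a submultiplicative prenorm. Since g is nilpotent and not abelian, there is a linear
   functional f on g that vanishes on [g,[g,g]] and takes the value 1 on some [e_i0,e_j0].
   The form B(a,b) = f[a,b] is realised by a Schroedinger-type representation of g by
   differential operators in commuting variables x_0, ..., x_n and a variable z, with
   [e_a, e_b] acting as B(a,b) z on the series annihilated by the derivations
   sum_l c_abl d/dx_l. Every word acts on the series 1 with coefficients bounded independently of
   the word, so an element of U(g) that moves 1 has positive p-norm.
   Corrected by central terms, e_i0 and e_j0 act as x_n and z d/dx_n, so the Euler operator
   z x_n d/dx_n is in the image, and Lagrange interpolation in it yields projections onto the
   eigenvectors x_n^m z^r. Composing them with x_n gives, for each word v, elements b_j of U(g)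
   such that b_u1 ... b_uk 1 has a nonzero coefficient at x_n^|v| z^(|v|^2) only for u = v.
   Hence no nonzero polynomial identity holds, already on constant Cauchy sequences. *)

definition supp :: "fa \<Rightarrow> nat list set" where
  "supp a = {w. a w \<noteq> 0}"

lemma FA_iff: "a \<in> FA n \<longleftrightarrow> finite (supp a) \<and> (\<forall>w. a w \<noteq> 0 \<longrightarrow> set w \<subseteq> {..<n})"
  by (simp add: FA_def supp_def)

lemma finite_supp_FA: "a \<in> FA n \<Longrightarrow> finite (supp a)"
  by (simp add: FA_iff)

lemma fa_mult_factorization_sum:
  assumes "finite Sa" "finite Sb" "supp a \<subseteq> Sa" "supp b \<subseteq> Sb"
  shows "fa_mult a b w = (\<Sum>x\<in>{x\<in>Sa\<times>Sb. fst x @ snd x = w}. a (fst x) * b (snd x))"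
proof -
  let ?I = "{i. i \<le> length w \<and> take i w \<in> Sa \<and> drop i w \<in> Sb}"
  let ?T = "{x\<in>Sa\<times>Sb. fst x @ snd x = w}"
  have "fa_mult a b w = (\<Sum>i\<in>{..length w}. a (take i w) * b (drop i w))"
    by (simp add: fa_mult_def)
  also have "\<dots> = (\<Sum>i\<in>?I. a (take i w) * b (drop i w))"
    by (rule sum.mono_neutral_right) (use assms(3,4) in \<open>auto simp: supp_def\<close>)
  also have "\<dots> = (\<Sum>x\<in>?T. a (fst x) * b (snd x))"
  proof (rule sum.reindex_bij_betw[where h="\<lambda>i. (take i w, drop i w)"
      and g="\<lambda>x. a (fst x) * b (snd x)", simplified])
    have "inj_on (\<lambda>i. (take i w, drop i w)) ?I"
      by (rule inj_onI) (metis (no_types, lifting) length_take mem_Collect_eq min.absorb2 prod.inject)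
    moreover have "?T \<subseteq> (\<lambda>i. (take i w, drop i w)) ` ?I"
    proof
      fix x assume x: "x \<in> ?T"
      then show "x \<in> (\<lambda>i. (take i w, drop i w)) ` ?I"
        by (intro image_eqI[where x="length (fst x)"]) auto
    qed
    ultimately show "bij_betw (\<lambda>i. (take i w, drop i w)) ?I ?T"
      unfolding bij_betw_def by auto
  qed
  finally show ?thesis .
qed

lemma supp_fa_mult:
  assumes "finite (supp a)" "finite (supp b)"
  shows "supp (fa_mult a b) \<subseteq> (\<lambda>x. fst x @ snd x) ` (supp a \<times> supp b)"
proof
  fix w assume "w \<in> supp (fa_mult a b)"
  then have "(\<Sum>x\<in>{x\<in>supp a\<times>supp b. fst x @ snd x = w}. a (fst x) * b (snd x)) \<noteq> 0"
    using fa_mult_factorization_sum[OF assms] by (simp add: supp_def)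
  then have "{x\<in>supp a\<times>supp b. fst x @ snd x = w} \<noteq> {}"
    by (intro notI) simp
  then obtain x where "x \<in> supp a \<times> supp b" "fst x @ snd x = w"
    by blast
  then show "w \<in> (\<lambda>x. fst x @ snd x) ` (supp a \<times> supp b)"
    by blast
qed

lemma FA_mult: "a \<in> FA n \<Longrightarrow> b \<in> FA n \<Longrightarrow> fa_mult a b \<in> FA n"
proof -
  assume a: "a \<in> FA n" and b: "b \<in> FA n"
  then have fa: "finite (supp a)" and fb: "finite (supp b)" by (auto simp: FA_iff)
  have sub: "supp (fa_mult a b) \<subseteq> (\<lambda>x. fst x @ snd x) ` (supp a \<times> supp b)"
    by (rule supp_fa_mult[OF fa fb])
  then have "finite (supp (fa_mult a b))"
    using fa fb by (meson finite_SigmaI finite_imageI finite_subset)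
  moreover have "set w \<subseteq> {..<n}" if w: "fa_mult a b w \<noteq> 0" for w
  proof -
    obtain u v where "u \<in> supp a" "v \<in> supp b" "w = u @ v"
      using sub w by (auto simp: supp_def)
    then show ?thesis using a b by (auto simp: FA_iff supp_def)
  qed
  ultimately show ?thesis by (simp add: FA_iff)
qed

lemma FA_add: "a \<in> FA n \<Longrightarrow> b \<in> FA n \<Longrightarrow> fa_add a b \<in> FA n"
proof -
  assume a: "a \<in> FA n" and b: "b \<in> FA n"
  have "supp (fa_add a b) \<subseteq> supp a \<union> supp b" by (auto simp: supp_def fa_add_def)
  then show ?thesis using a b unfolding FA_iff by (auto simp: fa_add_def supp_def intro: finite_subset)
qed

lemma FA_diff: "a \<in> FA n \<Longrightarrow> b \<in> FA n \<Longrightarrow> fa_diff a b \<in> FA n"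
proof -
  assume a: "a \<in> FA n" and b: "b \<in> FA n"
  have "supp (fa_diff a b) \<subseteq> supp a \<union> supp b" by (auto simp: supp_def fa_diff_def)
  then show ?thesis using a b unfolding FA_iff by (auto simp: fa_diff_def supp_def intro: finite_subset)
qed

lemma FA_scale: "a \<in> FA n \<Longrightarrow> fa_scale z a \<in> FA n"
proof -
  assume a: "a \<in> FA n"
  have "supp (fa_scale z a) \<subseteq> supp a" by (auto simp: supp_def fa_scale_def)
  then show ?thesis using a unfolding FA_iff by (auto simp: fa_scale_def supp_def intro: finite_subset)
qed

lemma FA_one: "fa_one \<in> FA n"
proof -
  have "supp fa_one \<subseteq> {[]}" by (auto simp: supp_def fa_one_def)
  then show ?thesis unfolding FA_iff by (auto simp: fa_one_def intro: finite_subset)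
qed

lemma FA_gen: "i < n \<Longrightarrow> fa_gen i \<in> FA n"
proof -
  assume i: "i < n"
  have "supp (fa_gen i) \<subseteq> {[i]}" by (auto simp: supp_def fa_gen_def split: if_splits)
  then show ?thesis using i unfolding FA_iff by (auto simp: fa_gen_def intro: finite_subset split: if_splits)
qed

lemma FA_zero: "(\<lambda>_. 0) \<in> FA n"
  by (simp add: FA_iff supp_def)

lemma FA_prod: "(\<forall>x\<in>set xs. x \<in> FA n) \<Longrightarrow> fa_prod xs \<in> FA n"
  by (induction xs) (auto simp: FA_one FA_mult)

lemma FA_lincomb: "finite V \<Longrightarrow> (\<forall>v\<in>V. h v \<in> FA n) \<Longrightarrow> (\<lambda>w. \<Sum>v\<in>V. g v * h v w) \<in> FA n"
proof (induction V rule: finite_induct)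
  case empty
  then show ?case by (simp add: FA_zero)
next
  case (insert x F)
  have "(\<lambda>w. \<Sum>v\<in>insert x F. g v * h v w) = fa_add (fa_scale (g x) (h x)) (\<lambda>w. \<Sum>v\<in>F. g v * h v w)"
    using insert by (simp add: fa_add_def fa_scale_def)
  then show ?case using insert by (simp add: FA_add FA_scale)
qed

lemma fa_mult_one_left: "fa_mult fa_one b = b"
proof
  fix w
  have "fa_mult fa_one b w = (\<Sum>i\<le>length w. if i = 0 then b (drop i w) else 0)"
    unfolding fa_mult_def fa_one_def by (intro sum.cong refl) (auto simp: take_eq_Nil)
  then show "fa_mult fa_one b w = b w" by (simp add: sum.delta)
qed

lemma fa_mult_scale_left: "fa_mult (fa_scale z a) b = fa_scale z (fa_mult a b)"
  by (rule ext) (simp add: fa_mult_def fa_scale_def sum_distrib_left mult.assoc)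

lemma ue_ideal_in_FA: "j \<in> ue_ideal c n \<Longrightarrow> j \<in> FA n"
proof (induction rule: ue_ideal.induct)
  case (rel i j)
  have "(\<lambda>w. \<Sum>k<n. c i j k * fa_gen k w) \<in> FA n"
    by (rule FA_lincomb) (auto intro: FA_gen)
  then show ?case using rel by (simp add: ue_rel_def FA_diff FA_mult FA_gen)
qed (simp_all add: FA_zero FA_add FA_mult)

lemma ue_ideal_scale: "j \<in> ue_ideal c n \<Longrightarrow> fa_scale z j \<in> ue_ideal c n"
  using ue_ideal.mult_left[OF FA_scale[OF FA_one]]
  by (metis fa_mult_one_left fa_mult_scale_left)

lemma ue_ideal_diff: "a \<in> ue_ideal c n \<Longrightarrow> b \<in> ue_ideal c n \<Longrightarrow> fa_diff a b \<in> ue_ideal c n"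
proof -
  assume a: "a \<in> ue_ideal c n" and b: "b \<in> ue_ideal c n"
  have "fa_diff a b = fa_add a (fa_scale (-1) b)"
    by (rule ext) (simp add: fa_diff_def fa_add_def fa_scale_def)
  then show ?thesis using a b by (simp add: ue_ideal.add ue_ideal_scale)
qed

section \<open>The quotient $\ell^1$-norm\<close>

definition l1_norm :: "fa \<Rightarrow> real" where
  "l1_norm a = (\<Sum>w\<in>supp a. cmod (a w))"

lemma l1_norm_eq_sum_superset: "finite S \<Longrightarrow> supp a \<subseteq> S \<Longrightarrow> l1_norm a = (\<Sum>w\<in>S. cmod (a w))"
  unfolding l1_norm_def by (rule sum.mono_neutral_left) (auto simp: supp_def)

lemma l1_norm_nonneg: "0 \<le> l1_norm a"
  unfolding l1_norm_def by (rule sum_nonneg) auto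

lemma l1_norm_zero: "l1_norm (\<lambda>_. 0) = 0"
  by (simp add: l1_norm_def supp_def)

lemma l1_norm_add_le:
  assumes "finite (supp a)" "finite (supp b)"
  shows "l1_norm (fa_add a b) \<le> l1_norm a + l1_norm b"
proof -
  have f: "finite (supp a \<union> supp b)" using assms by auto
  have "l1_norm (fa_add a b) = (\<Sum>w\<in>supp a \<union> supp b. cmod (a w + b w))"
    by (subst l1_norm_eq_sum_superset[OF f]) (auto simp: supp_def fa_add_def)
  also have "\<dots> \<le> (\<Sum>w\<in>supp a \<union> supp b. cmod (a w) + cmod (b w))"
    by (rule sum_mono) (rule norm_triangle_ineq)
  also have "\<dots> = l1_norm a + l1_norm b"
    by (simp add: sum.distrib l1_norm_eq_sum_superset[OF f])
  finally show ?thesis .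
qed

lemma l1_norm_scale:
  assumes "finite (supp a)"
  shows "l1_norm (fa_scale z a) = cmod z * l1_norm a"
proof -
  have "l1_norm (fa_scale z a) = (\<Sum>w\<in>supp a. cmod (z * a w))"
    by (subst l1_norm_eq_sum_superset[OF assms]) (auto simp: supp_def fa_scale_def)
  then show ?thesis by (simp add: l1_norm_def norm_mult sum_distrib_left)
qed

lemma l1_norm_mult_le:
  assumes fa: "finite (supp a)" and fb: "finite (supp b)"
  shows "l1_norm (fa_mult a b) \<le> l1_norm a * l1_norm b"
proof -
  let ?T = "(\<lambda>x. fst x @ snd x) ` (supp a \<times> supp b)"
  let ?F = "\<lambda>w. {x\<in>supp a \<times> supp b. fst x @ snd x = w}"
  have "l1_norm (fa_mult a b) = (\<Sum>w\<in>?T. cmod (fa_mult a b w))"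
    using fa fb by (intro l1_norm_eq_sum_superset supp_fa_mult) auto
  also have "\<dots> = (\<Sum>w\<in>?T. cmod (\<Sum>x\<in>?F w. a (fst x) * b (snd x)))"
    by (simp add: fa_mult_factorization_sum[OF fa fb order_refl order_refl])
  also have "\<dots> \<le> (\<Sum>w\<in>?T. \<Sum>x\<in>?F w. cmod (a (fst x)) * cmod (b (snd x)))"
    by (intro sum_mono) (metis (no_types, lifting) norm_mult norm_sum sum.cong)
  also have "\<dots> = (\<Sum>x\<in>supp a \<times> supp b. cmod (a (fst x)) * cmod (b (snd x)))"
    by (rule sum.group) (use fa fb in auto)
  also have "\<dots> = l1_norm a * l1_norm b"
    by (simp add: l1_norm_def sum_product sum.cartesian_product case_prod_beta)
  finally show ?thesis .
qed

lemma le_cInf_add: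
  fixes X Y :: "real set"
  assumes "X \<noteq> {}" "Y \<noteq> {}" "bdd_below X" "bdd_below Y" "\<forall>x\<in>X. \<forall>y\<in>Y. c \<le> x + y"
  shows "c \<le> Inf X + Inf Y"
proof -
  have "c - y \<le> Inf X" if "y \<in> Y" for y
    by (rule cInf_greatest) (use assms that in \<open>auto simp: algebra_simps\<close>)
  then have "\<forall>y\<in>Y. c - Inf X \<le> y" by (auto simp: algebra_simps)
  then have "c - Inf X \<le> Inf Y"
    using assms by (auto intro!: cInf_greatest)
  then show ?thesis by simp
qed

lemma le_mult_cInf:
  fixes Y :: "real set"
  assumes "Y \<noteq> {}" "\<forall>y\<in>Y. 0 \<le> y" "0 \<le> x" "\<forall>y\<in>Y. c \<le> x * y"
  shows "c \<le> x * Inf Y"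
proof (rule ccontr)
  assume "\<not> c \<le> x * Inf Y"
  then have lt: "x * Inf Y < c" by simp
  have bY: "bdd_below Y" using assms(2) by (auto simp: bdd_below_def)
  show False
  proof (cases "x = 0")
    case True
    obtain y where "y \<in> Y" using assms(1) by auto
    then show False using assms(4) lt True by fastforce
  next
    case False
    then have xp: "0 < x" using assms(3) by simp
    then have "Inf Y < c / x" using lt by (simp add: field_simps)
    then obtain y where y: "y \<in> Y" "y < c / x" using cInf_less_iff[OF assms(1) bY] by auto
    then have "x * y < c" using xp by (simp add: field_simps)
    then show False using assms(4) y by fastforce
  qed
qed

lemma le_cInf_mult:
  fixes X Y :: "real set"
  assumes "X \<noteq> {}" "Y \<noteq> {}" "\<forall>x\<in>X. 0 \<le> x" "\<forall>y\<in>Y. 0 \<le> y" "\<forall>x\<in>X. \<forall>y\<in>Y. c \<le> x * y"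
  shows "c \<le> Inf X * Inf Y"
proof -
  have "\<forall>x\<in>X. c \<le> Inf Y * x"
    using assms le_mult_cInf[of Y] by (auto simp: mult.commute)
  moreover have "0 \<le> Inf Y" using assms by (auto intro!: cInf_greatest)
  ultimately show ?thesis
    using le_mult_cInf[of X "Inf Y" c] assms by (simp add: mult.commute)
qed

definition quot_norm :: "(nat \<Rightarrow> nat \<Rightarrow> nat \<Rightarrow> complex) \<Rightarrow> nat \<Rightarrow> fa \<Rightarrow> real" where
  "quot_norm c n a = Inf ((\<lambda>j. l1_norm (fa_diff a j)) ` ue_ideal c n)"

lemma quot_norm_le: "j \<in> ue_ideal c n \<Longrightarrow> quot_norm c n a \<le> l1_norm (fa_diff a j)"
  unfolding quot_norm_def by (rule cInf_lower) (auto simp: bdd_below_def intro: l1_norm_nonneg)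

lemma quot_norm_greatest:
  "(\<And>j. j \<in> ue_ideal c n \<Longrightarrow> x \<le> l1_norm (fa_diff a j)) \<Longrightarrow> x \<le> quot_norm c n a"
  unfolding quot_norm_def by (rule cInf_greatest) (auto intro: ue_ideal.zero)

lemma quot_norm_nonneg: "0 \<le> quot_norm c n a"
  by (rule quot_norm_greatest) (rule l1_norm_nonneg)

lemma quot_norm_zero: "quot_norm c n (\<lambda>_. 0) = 0"
proof -
  have "quot_norm c n (\<lambda>_. 0) \<le> l1_norm (fa_diff (\<lambda>_. 0) (\<lambda>_. 0))"
    by (rule quot_norm_le) (rule ue_ideal.zero)
  then show ?thesis
    using quot_norm_nonneg[of c n] by (simp add: fa_diff_def l1_norm_zero order_antisym)
qed

lemma quot_norm_coset_le:
  assumes "fa_diff a b \<in> ue_ideal c n"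
  shows "quot_norm c n a \<le> quot_norm c n b"
proof (rule quot_norm_greatest)
  fix j assume "j \<in> ue_ideal c n"
  then have "quot_norm c n a \<le> l1_norm (fa_diff a (fa_add (fa_diff a b) j))"
    using assms by (intro quot_norm_le ue_ideal.add)
  moreover have "fa_diff a (fa_add (fa_diff a b) j) = fa_diff b j"
    by (rule ext) (simp add: fa_diff_def fa_add_def)
  ultimately show "quot_norm c n a \<le> l1_norm (fa_diff b j)" by simp
qed

lemma quot_norm_coset:
  assumes "fa_diff a b \<in> ue_ideal c n"
  shows "quot_norm c n a = quot_norm c n b"
proof -
  have "fa_diff b a = fa_scale (-1) (fa_diff a b)"
    by (rule ext) (simp add: fa_diff_def fa_scale_def)
  then have "fa_diff b a \<in> ue_ideal c n" using assms by (simp add: ue_ideal_scale)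
  then show ?thesis using assms by (simp add: order_antisym quot_norm_coset_le)
qed

lemma quot_norm_add_le:
  assumes a: "a \<in> FA n" and b: "b \<in> FA n"
  shows "quot_norm c n (fa_add a b) \<le> quot_norm c n a + quot_norm c n b"
  unfolding quot_norm_def[of c n a] quot_norm_def[of c n b]
proof (rule le_cInf_add)
  show "\<forall>x\<in>(\<lambda>j. l1_norm (fa_diff a j)) ` ue_ideal c n. \<forall>y\<in>(\<lambda>j. l1_norm (fa_diff b j)) ` ue_ideal c n.
      quot_norm c n (fa_add a b) \<le> x + y"
  proof (intro ballI, elim imageE)
    fix x y j1 j2 assume x: "x = l1_norm (fa_diff a j1)" and j1: "j1 \<in> ue_ideal c n"
      and y: "y = l1_norm (fa_diff b j2)" and j2: "j2 \<in> ue_ideal c n"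
    have "quot_norm c n (fa_add a b) \<le> l1_norm (fa_diff (fa_add a b) (fa_add j1 j2))"
      using j1 j2 by (intro quot_norm_le ue_ideal.add)
    also have "fa_diff (fa_add a b) (fa_add j1 j2) = fa_add (fa_diff a j1) (fa_diff b j2)"
      by (rule ext) (simp add: fa_diff_def fa_add_def)
    also have "l1_norm \<dots> \<le> x + y" unfolding x y
      by (rule l1_norm_add_le) (use a b j1 j2 ue_ideal_in_FA in \<open>auto intro!: finite_supp_FA FA_diff\<close>)
    finally show "quot_norm c n (fa_add a b) \<le> x + y" .
  qed
qed (auto simp: bdd_below_def intro: ue_ideal.zero l1_norm_nonneg)

lemma quot_norm_scale_le:
  assumes a: "a \<in> FA n" and z: "z \<noteq> 0"
  shows "quot_norm c n (fa_scale z a) \<le> cmod z * quot_norm c n a"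
proof -
  have "quot_norm c n (fa_scale z a) / cmod z \<le> quot_norm c n a"
  proof (rule quot_norm_greatest)
    fix j assume j: "j \<in> ue_ideal c n"
    have "quot_norm c n (fa_scale z a) \<le> l1_norm (fa_diff (fa_scale z a) (fa_scale z j))"
      using j by (intro quot_norm_le ue_ideal_scale)
    also have "fa_diff (fa_scale z a) (fa_scale z j) = fa_scale z (fa_diff a j)"
      by (rule ext) (simp add: fa_diff_def fa_scale_def algebra_simps)
    also have "l1_norm \<dots> = cmod z * l1_norm (fa_diff a j)"
      using a j ue_ideal_in_FA by (intro l1_norm_scale finite_supp_FA FA_diff) auto
    finally show "quot_norm c n (fa_scale z a) / cmod z \<le> l1_norm (fa_diff a j)"
      using z by (simp add: field_simps)
  qed
  then show ?thesis using z by (simp add: field_simps)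
qed

lemma quot_norm_scale:
  assumes a: "a \<in> FA n"
  shows "quot_norm c n (fa_scale z a) = cmod z * quot_norm c n a"
proof (cases "z = 0")
  case True
  then have "fa_scale z a = (\<lambda>_. 0)" by (simp add: fa_scale_def)
  then show ?thesis using True by (simp add: quot_norm_zero)
next
  case False
  have "fa_scale (inverse z) (fa_scale z a) = a"
    using False by (intro ext) (simp add: fa_scale_def)
  then have "quot_norm c n a \<le> cmod (inverse z) * quot_norm c n (fa_scale z a)"
    using quot_norm_scale_le[OF FA_scale[OF a], of "inverse z" c z] False by simp
  then have "cmod z * quot_norm c n a \<le> cmod z * (cmod (inverse z) * quot_norm c n (fa_scale z a))"
    by (rule mult_left_mono) simp
  also have "\<dots> = quot_norm c n (fa_scale z a)"
    using False by (simp add: norm_inverse)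
  finally have "cmod z * quot_norm c n a \<le> quot_norm c n (fa_scale z a)" .
  then show ?thesis using quot_norm_scale_le[OF a False, where c=c] by simp
qed

lemma quot_norm_mult_le:
  assumes a: "a \<in> FA n" and b: "b \<in> FA n"
  shows "quot_norm c n (fa_mult a b) \<le> quot_norm c n a * quot_norm c n b"
  unfolding quot_norm_def[of c n a] quot_norm_def[of c n b]
proof (rule le_cInf_mult)
  show "\<forall>x\<in>(\<lambda>j. l1_norm (fa_diff a j)) ` ue_ideal c n. \<forall>y\<in>(\<lambda>j. l1_norm (fa_diff b j)) ` ue_ideal c n.
      quot_norm c n (fa_mult a b) \<le> x * y"
  proof (intro ballI, elim imageE)
    fix x y j1 j2 assume x: "x = l1_norm (fa_diff a j1)" and j1: "j1 \<in> ue_ideal c n"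
      and y: "y = l1_norm (fa_diff b j2)" and j2: "j2 \<in> ue_ideal c n"
    have j1F: "j1 \<in> FA n" and j2F: "j2 \<in> FA n" using j1 j2 by (auto intro: ue_ideal_in_FA)
    let ?J = "fa_diff (fa_add (fa_mult j1 b) (fa_mult a j2)) (fa_mult j1 j2)"
    have "?J \<in> ue_ideal c n"
      using j1 j2 a b j2F by (intro ue_ideal_diff ue_ideal.add ue_ideal.mult_right ue_ideal.mult_left)
    then have "quot_norm c n (fa_mult a b) \<le> l1_norm (fa_diff (fa_mult a b) ?J)"
      by (rule quot_norm_le)
    also have "fa_diff (fa_mult a b) ?J = fa_mult (fa_diff a j1) (fa_diff b j2)"
      by (rule ext) (simp add: fa_mult_def fa_diff_def fa_add_def algebra_simps sum_subtractf sum.distrib)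
    also have "l1_norm \<dots> \<le> x * y" unfolding x y
      by (rule l1_norm_mult_le) (use a b j1F j2F in \<open>auto intro!: finite_supp_FA FA_diff\<close>)
    finally show "quot_norm c n (fa_mult a b) \<le> x * y" .
  qed
qed (auto intro: ue_ideal.zero l1_norm_nonneg)

lemma ue_prenorm_quot_norm: "ue_prenorm c n (quot_norm c n)"
  unfolding ue_prenorm_def
  by (intro conjI ballI allI impI quot_norm_coset quot_norm_add_le quot_norm_scale quot_norm_mult_le)

type_synonym cvec = "nat \<Rightarrow> complex"

inductive_set lspan :: "cvec set \<Rightarrow> cvec set" for S where
  base: "x \<in> S \<Longrightarrow> x \<in> lspan S"
| zero: "(\<lambda>_. 0) \<in> lspan S"
| add: "x \<in> lspan S \<Longrightarrow> y \<in> lspan S \<Longrightarrow> (\<lambda>k. x k + y k) \<in> lspan S"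
| smult: "x \<in> lspan S \<Longrightarrow> (\<lambda>k. a * x k) \<in> lspan S"

lemma lspan_mono:
  assumes "S \<subseteq> lspan T"
  shows "x \<in> lspan S \<Longrightarrow> x \<in> lspan T"
  by (induction rule: lspan.induct) (use assms in \<open>auto intro: lspan.intros\<close>)

lemma lspan_lincomb:
  "finite I \<Longrightarrow> (\<And>i. i \<in> I \<Longrightarrow> g i \<in> lspan S) \<Longrightarrow> (\<lambda>k. \<Sum>i\<in>I. a i * g i k) \<in> lspan S"
proof (induction I rule: finite_induct)
  case empty
  then show ?case by (simp add: lspan.zero)
next
  case (insert x F)
  have "(\<lambda>k. a x * g x k) \<in> lspan S" using insert by (intro lspan.smult) auto
  moreover have "(\<lambda>k. \<Sum>i\<in>F. a i * g i k) \<in> lspan S" using insert by auto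
  ultimately show ?case using lspan.add insert by fastforce
qed

lemma lspan_image_linear:
  assumes "\<And>x y. f (\<lambda>k. x k + y k) = (\<lambda>k. f x k + f y k)"
    and "\<And>a x. f (\<lambda>k. a * x k) = (\<lambda>k. a * f x k)"
    and "f (\<lambda>_. 0) = (\<lambda>_. 0)"
  shows "x \<in> lspan S \<Longrightarrow> f x \<in> lspan (f ` S)"
  by (induction rule: lspan.induct) (simp_all add: assms lspan.intros)

lemma lspan_eq_zero:
  assumes "\<forall>s\<in>S. s = (\<lambda>_. 0)"
  shows "x \<in> lspan S \<Longrightarrow> x = (\<lambda>_. 0)"
  by (induction rule: lspan.induct) (use assms in auto)

lemma lspan_insert_lincomb: "y \<in> lspan W \<Longrightarrow> (\<lambda>k. y k + a * w k) \<in> lspan (insert w W)"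
proof -
  assume "y \<in> lspan W"
  then have "y \<in> lspan (insert w W)" by (rule lspan_mono[rotated]) (auto intro: lspan.base)
  moreover have "(\<lambda>k. a * w k) \<in> lspan (insert w W)" by (auto intro: lspan.base lspan.smult)
  ultimately show ?thesis using lspan.add by fastforce
qed

definition pairing :: "nat \<Rightarrow> cvec \<Rightarrow> cvec \<Rightarrow> complex" where
  "pairing n f x = (\<Sum>k<n. f k * x k)"

lemma pairing_diff_left: "pairing n (\<lambda>k. f k - r * g k) x = pairing n f x - r * pairing n g x"
  by (simp add: pairing_def algebra_simps sum_subtractf sum_distrib_left)

lemma pairing_diff_right: "pairing n f (\<lambda>k. x k - r * y k) = pairing n f x - r * pairing n f y"
  by (simp add: pairing_def algebra_simps sum_subtractf sum_distrib_left)

lemma pairing_nonzero: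
  assumes "v \<noteq> (\<lambda>_. 0)" "\<forall>k\<ge>n. v k = 0"
  shows "\<exists>f. pairing n f v = 1"
proof -
  obtain k where k: "v k \<noteq> 0" using assms(1) by auto
  then have "k < n" using assms(2) by (meson not_le)
  then have "pairing n (\<lambda>k'. if k' = k then 1 / v k else 0) v = 1"
    using k by (simp add: pairing_def if_distrib[of "\<lambda>x. x * _"] sum.delta cong: if_cong)
  then show ?thesis by blast
qed

lemma separating_functional:
  assumes "finite W" and "\<forall>x\<in>insert v W. \<forall>k\<ge>n. x k = 0" and "v \<notin> lspan W"
  shows "\<exists>f. (\<forall>w\<in>W. pairing n f w = 0) \<and> pairing n f v = 1"
  using assms
proof (induction W arbitrary: v rule: finite_induct)
  case empty
  then have "v \<noteq> (\<lambda>_. 0)" using lspan.zero by metis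
  then show ?case using pairing_nonzero empty(1) by auto
next
  case (insert w W)
  have "v \<notin> lspan W"
    using insert.prems(2) lspan_insert_lincomb[of v W 0 w] by auto
  then obtain f1 where f1: "\<forall>u\<in>W. pairing n f1 u = 0" "pairing n f1 v = 1"
    using insert.IH[of v] insert.prems by auto
  show ?case
  proof (cases "pairing n f1 w = 0")
    case True
    then show ?thesis using f1 by auto
  next
    case False
    \<comment> \<open>Correct v by a multiple of w to get a functional f2 vanishing on W, then kill w
      with a multiple of f1.\<close>
    let ?v' = "\<lambda>k. v k - (1 / pairing n f1 w) * w k"
    have "?v' \<notin> lspan W"
      using insert.prems(2) lspan_insert_lincomb[of ?v' W "1 / pairing n f1 w" w] by auto
    moreover have "\<forall>x\<in>insert ?v' W. \<forall>k\<ge>n. x k = 0" using insert.prems(1) by auto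
    ultimately obtain f2 where f2: "\<forall>u\<in>W. pairing n f2 u = 0" "pairing n f2 ?v' = 1"
      using insert.IH[of ?v'] by auto
    let ?f = "\<lambda>k. f2 k - (pairing n f2 w / pairing n f1 w) * f1 k"
    have f: "\<And>x. pairing n ?f x = pairing n f2 x - (pairing n f2 w / pairing n f1 w) * pairing n f1 x"
      by (rule pairing_diff_left)
    have "pairing n f2 v = 1 + pairing n f2 w / pairing n f1 w"
      using f2(2) pairing_diff_right[of n f2 v "1 / pairing n f1 w" w] by (simp add: algebra_simps)
    then have "pairing n ?f v = 1" using f f1(2) by simp
    moreover have "pairing n ?f w = 0" using f False by simp
    moreover have "\<forall>u\<in>W. pairing n ?f u = 0" using f f1(1) f2(1) by simp
    ultimately show ?thesis by auto
  qed
qed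

definition basis_vec :: "nat \<Rightarrow> cvec" where
  "basis_vec i = (\<lambda>k. if k = i then 1 else 0)"

lemma sum_basis_vec_mult: "j < n \<Longrightarrow> (\<Sum>y<n. basis_vec j y * g y) = g j"
  by (simp add: basis_vec_def if_distrib[of "\<lambda>x. x * _"] sum.delta cong: if_cong)

lemma lie_br_basis_left:
  "a < n \<Longrightarrow> lie_br c n (basis_vec a) w = (\<lambda>k. if k < n then (\<Sum>y<n. w y * c a y k) else 0)"
  by (rule ext) (simp add: lie_br_def mult.assoc sum_basis_vec_mult flip: sum_distrib_left)

lemma lie_br_basis:
  "i < n \<Longrightarrow> j < n \<Longrightarrow> lie_br c n (basis_vec i) (basis_vec j) = (\<lambda>k. if k < n then c i j k else 0)"
  by (intro ext) (simp add: lie_br_basis_left sum_basis_vec_mult[of j n])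

lemma lie_br_expand_basis:
  "lie_br c n u v = (\<lambda>k. \<Sum>p\<in>{..<n}\<times>{..<n}.
      (u (fst p) * v (snd p)) * lie_br c n (basis_vec (fst p)) (basis_vec (snd p)) k)"
proof
  fix k
  show "lie_br c n u v k = (\<Sum>p\<in>{..<n}\<times>{..<n}.
      (u (fst p) * v (snd p)) * lie_br c n (basis_vec (fst p)) (basis_vec (snd p)) k)"
  proof (cases "k < n")
    case True
    have "(\<Sum>p\<in>{..<n}\<times>{..<n}. (u (fst p) * v (snd p)) * lie_br c n (basis_vec (fst p)) (basis_vec (snd p)) k)
        = (\<Sum>p\<in>{..<n}\<times>{..<n}. u (fst p) * v (snd p) * c (fst p) (snd p) k)"
      by (intro sum.cong refl) (auto simp: lie_br_basis True)
    then show ?thesis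
      by (simp add: lie_br_def True sum.cartesian_product')
  qed (simp add: lie_br_def)
qed

lemma lie_br_add_left: "lie_br c n (\<lambda>k. x k + y k) u = (\<lambda>k. lie_br c n x u k + lie_br c n y u k)"
  by (rule ext) (simp add: lie_br_def algebra_simps sum.distrib)

lemma lie_br_add_right: "lie_br c n u (\<lambda>k. x k + y k) = (\<lambda>k. lie_br c n u x k + lie_br c n u y k)"
  by (rule ext) (simp add: lie_br_def algebra_simps sum.distrib)

lemma lie_br_scale_right: "lie_br c n u (\<lambda>k. a * x k) = (\<lambda>k. a * lie_br c n u x k)"
  by (rule ext) (simp add: lie_br_def algebra_simps sum_distrib_left)

lemma lie_br_zero_right: "lie_br c n u (\<lambda>_. 0) = (\<lambda>_. 0)"
  by (rule ext) (simp add: lie_br_def)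

lemma nest_br_add: "nest_br c n (\<lambda>k. x k + y k) us = (\<lambda>k. nest_br c n x us k + nest_br c n y us k)"
  by (induction us) (simp_all add: lie_br_add_right)

lemma nest_br_scale: "nest_br c n (\<lambda>k. a * x k) us = (\<lambda>k. a * nest_br c n x us k)"
  by (induction us) (simp_all add: lie_br_scale_right)

lemma nest_br_zero: "nest_br c n (\<lambda>_. 0) us = (\<lambda>_. 0)"
  by (induction us) (simp_all add: lie_br_zero_right)

lemma nest_br_append: "nest_br c n x (us @ vs) = nest_br c n (nest_br c n x vs) us"
  by (induction us) simp_all

lemma structure_constants_skew:
  assumes L: "is_lie_algebra c n" and i: "i < n" and j: "j < n" and k: "k < n"
  shows "c j i k = - c i j k"
proof -
  have alt: "\<And>u. lie_br c n u u k = 0" using L by (simp add: is_lie_algebra_def)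
  have "c i i k = 0" "c j j k = 0"
    using alt[of "basis_vec i"] alt[of "basis_vec j"] i j k by (simp_all add: lie_br_basis)
  moreover have "lie_br c n (\<lambda>k. basis_vec i k + basis_vec j k) (\<lambda>k. basis_vec i k + basis_vec j k) k
      = c i i k + c i j k + c j i k + c j j k"
    using i j k by (simp add: lie_br_add_left lie_br_add_right lie_br_basis)
  ultimately show ?thesis using alt by (simp add: add_eq_0_iff)
qed

definition triple_brackets :: "(nat \<Rightarrow> nat \<Rightarrow> nat \<Rightarrow> complex) \<Rightarrow> nat \<Rightarrow> cvec set" where
  "triple_brackets c n = (\<lambda>(a, i, j). lie_br c n (basis_vec a) (lie_br c n (basis_vec i) (basis_vec j)))
      ` ({..<n} \<times> {..<n} \<times> {..<n})"

definition nested_brackets :: "(nat \<Rightarrow> nat \<Rightarrow> nat \<Rightarrow> complex) \<Rightarrow> nat \<Rightarrow> nat \<Rightarrow> cvec set" where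
  "nested_brackets c n m = {nest_br c n x us | x us. length us = m}"

lemma nested_brackets_subset_lspan_Suc:
  assumes H: "\<forall>i<n. \<forall>j<n. lie_br c n (basis_vec i) (basis_vec j) \<in> lspan (triple_brackets c n)"
    and m: "1 \<le> m"
  shows "nested_brackets c n m \<subseteq> lspan (nested_brackets c n (Suc m))"
proof
  fix g assume "g \<in> nested_brackets c n m"
  then obtain x us where g: "g = nest_br c n x us" and len: "length us = m"
    by (auto simp: nested_brackets_def)
  moreover have "us \<noteq> []" using len m by auto
  ultimately obtain us' u where us: "us = us' @ [u]" by (metis rev_exhaust)
  have "lie_br c n u x \<in> lspan (triple_brackets c n)"
    by (subst lie_br_expand_basis, rule lspan_lincomb) (use H in auto)
  then have "nest_br c n (lie_br c n u x) us' \<in> lspan ((\<lambda>y. nest_br c n y us') ` triple_brackets c n)"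
    by (rule lspan_image_linear[rotated 3]) (simp_all add: nest_br_add nest_br_scale nest_br_zero)
  moreover have "(\<lambda>y. nest_br c n y us') ` triple_brackets c n \<subseteq> nested_brackets c n (Suc m)"
  proof
    fix y assume "y \<in> (\<lambda>y. nest_br c n y us') ` triple_brackets c n"
    then obtain a i j where "y = nest_br c n (lie_br c n (basis_vec a) (lie_br c n (basis_vec i) (basis_vec j))) us'"
      by (auto simp: triple_brackets_def)
    then have "y = nest_br c n (basis_vec j) (us' @ [basis_vec a, basis_vec i])"
      by (simp add: nest_br_append)
    moreover have "length (us' @ [basis_vec a, basis_vec i]) = Suc m" using len us by simp
    ultimately show "y \<in> nested_brackets c n (Suc m)" unfolding nested_brackets_def by blast
  qed
  ultimately show "g \<in> lspan (nested_brackets c n (Suc m))"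
    using g us by (auto simp: nest_br_append intro: lspan_mono lspan.base)
qed

lemma bracket_notin_lspan_triple_brackets:
  assumes N: "lie_nilpotent c n" and A: "\<not> lie_abelian c n"
  shows "\<exists>i j. i < n \<and> j < n \<and> lie_br c n (basis_vec i) (basis_vec j) \<notin> lspan (triple_brackets c n)"
proof (rule ccontr)
  assume "\<not> ?thesis"
  then have H: "\<forall>i<n. \<forall>j<n. lie_br c n (basis_vec i) (basis_vec j) \<in> lspan (triple_brackets c n)"
    by auto
  \<comment> \<open>Then every bracket lies in the span of arbitrarily long nested brackets, which vanish.\<close>
  have span: "lie_br c n (basis_vec i) (basis_vec j) \<in> lspan (nested_brackets c n m)"
    if "i < n" "j < n" "1 \<le> m" for i j m
    using \<open>1 \<le> m\<close>
  proof (induction m rule: dec_induct)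
    case base
    have "lie_br c n (basis_vec i) (basis_vec j) = nest_br c n (basis_vec j) [basis_vec i]" by simp
    then show ?case unfolding nested_brackets_def
      by (intro lspan.base CollectI exI[of _ "basis_vec j"] exI[of _ "[basis_vec i]"]) simp
  next
    case (step m)
    then show ?case using nested_brackets_subset_lspan_Suc[OF H] lspan_mono by blast
  qed
  obtain m where "\<forall>x us. length us = Suc m \<longrightarrow> nest_br c n x us = (\<lambda>_. 0)"
    using N by (auto simp: lie_nilpotent_def)
  then have "\<forall>s\<in>nested_brackets c n (Suc m). s = (\<lambda>_. 0)" by (auto simp: nested_brackets_def)
  then have "lie_br c n (basis_vec i) (basis_vec j) = (\<lambda>_. 0)" if "i < n" "j < n" for i j
    using span[OF that, of "Suc m"] lspan_eq_zero by simp
  then have "lie_abelian c n"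
    unfolding lie_abelian_def by (subst lie_br_expand_basis) (auto intro!: sum.neutral)
  then show False using A by simp
qed

lemma functional_vanishing_on_triple_brackets:
  assumes "lie_nilpotent c n" and "\<not> lie_abelian c n"
  shows "\<exists>f i0 j0. i0 < n \<and> j0 < n \<and> (\<Sum>k<n. c i0 j0 k * f k) = 1 \<and>
     (\<forall>a i j. a < n \<longrightarrow> i < n \<longrightarrow> j < n \<longrightarrow> (\<Sum>y<n. c i j y * (\<Sum>m<n. c a y m * f m)) = 0)"
proof -
  obtain i0 j0 where ij: "i0 < n" "j0 < n"
    and nv: "lie_br c n (basis_vec i0) (basis_vec j0) \<notin> lspan (triple_brackets c n)"
    using bracket_notin_lspan_triple_brackets[OF assms] by auto
  have "finite (triple_brackets c n)" by (simp add: triple_brackets_def)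
  moreover have "\<forall>x\<in>insert (lie_br c n (basis_vec i0) (basis_vec j0)) (triple_brackets c n). \<forall>k\<ge>n. x k = 0"
    by (auto simp: triple_brackets_def lie_br_def)
  ultimately obtain f where f: "\<forall>w\<in>triple_brackets c n. pairing n f w = 0"
    "pairing n f (lie_br c n (basis_vec i0) (basis_vec j0)) = 1"
    using separating_functional nv by blast
  have "(\<Sum>k<n. c i0 j0 k * f k) = 1"
    using f(2) ij by (simp add: pairing_def lie_br_basis mult.commute)
  moreover have "(\<Sum>y<n. c i j y * (\<Sum>m<n. c a y m * f m)) = 0" if "a < n" "i < n" "j < n" for a i j
  proof -
    have "lie_br c n (basis_vec a) (lie_br c n (basis_vec i) (basis_vec j)) \<in> triple_brackets c n"
      unfolding triple_brackets_def by (rule image_eqI[where x="(a,i,j)"]) (use that in auto)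
    then have "0 = pairing n f (lie_br c n (basis_vec a) (lie_br c n (basis_vec i) (basis_vec j)))"
      using f(1) by auto
    also have "\<dots> = (\<Sum>m<n. f m * (\<Sum>y<n. c i j y * c a y m))"
      unfolding pairing_def lie_br_basis[OF that(2,3)] lie_br_basis_left[OF that(1)]
      by (intro sum.cong) auto
    also have "\<dots> = (\<Sum>m<n. \<Sum>y<n. c i j y * (c a y m * f m))"
      by (simp only: sum_distrib_left ac_simps)
    also have "\<dots> = (\<Sum>y<n. c i j y * (\<Sum>m<n. c a y m * f m))"
      by (subst sum.swap) (simp only: sum_distrib_left)
    finally show ?thesis by simp
  qed
  ultimately show ?thesis using ij by blast
qed

section \<open>Weyl algebra operators on formal power series\<close>

(* A series is the coefficient function of a formal power series in the variables x_0, x_1, ...,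
   indexed by exponent vectors. weyl_op n p q c is the operator
   sum_(k<=n) p_k z d/dx_k + sum_(k<=n) q_k x_k + c z, where z = x_(Suc n). *)
type_synonym monom = "nat \<Rightarrow> nat"
type_synonym series = "monom \<Rightarrow> complex"

definition mul_var :: "nat \<Rightarrow> series \<Rightarrow> series" where
  "mul_var k \<phi> = (\<lambda>M. if M k = 0 then 0 else \<phi> (M(k := M k - 1)))"

definition diff_var :: "nat \<Rightarrow> series \<Rightarrow> series" where
  "diff_var k \<phi> = (\<lambda>M. of_nat (Suc (M k)) * \<phi> (M(k := Suc (M k))))"

lemma diff_mul_var_same: "diff_var k (mul_var k \<phi>) = (\<lambda>M. mul_var k (diff_var k \<phi>) M + \<phi> M)"
proof
  fix M
  show "diff_var k (mul_var k \<phi>) M = mul_var k (diff_var k \<phi>) M + \<phi> M"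
  proof (cases "M k = 0")
    case False
    then have "M(k := M k - 1, k := Suc (M k - 1)) = M" by auto
    then show ?thesis using False by (simp add: diff_var_def mul_var_def of_nat_diff algebra_simps)
  qed (simp add: diff_var_def mul_var_def)
qed

lemma diff_mul_var_other: "k \<noteq> k' \<Longrightarrow> diff_var k (mul_var k' \<phi>) = mul_var k' (diff_var k \<phi>)"
  by (rule ext) (simp add: diff_var_def mul_var_def fun_upd_twist)

lemma mul_var_commute: "mul_var k (mul_var k' \<phi>) = mul_var k' (mul_var k \<phi>)"
  by (rule ext) (cases "k = k'"; simp add: mul_var_def fun_upd_twist)

lemma diff_var_commute: "diff_var k (diff_var k' \<phi>) = diff_var k' (diff_var k \<phi>)"
  by (rule ext) (cases "k = k'"; simp add: diff_var_def fun_upd_twist)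

lemma diff_var_add: "diff_var l (\<lambda>M. f M + g M) = (\<lambda>M. diff_var l f M + diff_var l g M)"
  by (rule ext) (simp add: diff_var_def algebra_simps)

lemma diff_var_diff: "diff_var l (\<lambda>M. f M - g M) = (\<lambda>M. diff_var l f M - diff_var l g M)"
  by (rule ext) (simp add: diff_var_def algebra_simps)

lemma diff_var_scale: "diff_var l (\<lambda>M. a * f M) = (\<lambda>M. a * diff_var l f M)"
  by (rule ext) (simp add: diff_var_def algebra_simps)

lemma diff_var_sum: "diff_var l (\<lambda>M. \<Sum>k\<in>K. g k M) = (\<lambda>M. \<Sum>k\<in>K. diff_var l (g k) M)"
  by (rule ext) (simp add: diff_var_def sum_distrib_left)

lemma diff_var_zero: "diff_var l (\<lambda>M. 0) = (\<lambda>M. 0)"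
  by (rule ext) (simp add: diff_var_def)

lemma mul_var_add: "mul_var l (\<lambda>M. f M + g M) = (\<lambda>M. mul_var l f M + mul_var l g M)"
  by (rule ext) (simp add: mul_var_def)

lemma mul_var_diff: "mul_var l (\<lambda>M. f M - g M) = (\<lambda>M. mul_var l f M - mul_var l g M)"
  by (rule ext) (simp add: mul_var_def)

lemma mul_var_scale: "mul_var l (\<lambda>M. a * f M) = (\<lambda>M. a * mul_var l f M)"
  by (rule ext) (simp add: mul_var_def)

lemma mul_var_sum: "mul_var l (\<lambda>M. \<Sum>k\<in>K. g k M) = (\<lambda>M. \<Sum>k\<in>K. mul_var l (g k) M)"
  by (rule ext) (simp add: mul_var_def)

lemma mul_var_zero: "mul_var l (\<lambda>M. 0) = (\<lambda>M. 0)"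
  by (rule ext) (simp add: mul_var_def)

lemmas var_op_linear = diff_var_add diff_var_diff diff_var_scale diff_var_sum diff_var_zero
  mul_var_add mul_var_diff mul_var_scale mul_var_sum mul_var_zero

definition weyl_op :: "nat \<Rightarrow> (nat \<Rightarrow> complex) \<Rightarrow> (nat \<Rightarrow> complex) \<Rightarrow> complex \<Rightarrow> series \<Rightarrow> series" where
  "weyl_op n p q c \<phi> = (\<lambda>M. (\<Sum>k\<le>n. p k * mul_var (Suc n) (diff_var k \<phi>) M)
      + (\<Sum>k\<le>n. q k * mul_var k \<phi> M) + c * mul_var (Suc n) \<phi> M)"

lemma weyl_op_add: "weyl_op n p q c (\<lambda>M. f M + g M) = (\<lambda>M. weyl_op n p q c f M + weyl_op n p q c g M)"
  by (rule ext) (simp add: weyl_op_def var_op_linear algebra_simps sum.distrib)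

lemma weyl_op_scale: "weyl_op n p q c (\<lambda>M. d * f M) = (\<lambda>M. d * weyl_op n p q c f M)"
  by (rule ext) (simp add: weyl_op_def var_op_linear algebra_simps sum_distrib_left)

lemma weyl_op_sum: "weyl_op n p q c (\<lambda>M. \<Sum>k\<in>K. g k M) = (\<lambda>M. \<Sum>k\<in>K. weyl_op n p q c (g k) M)"
  by (rule ext)
    (simp add: weyl_op_def var_op_linear algebra_simps sum_distrib_left sum.distrib sum.swap[of _ K])

lemma sum_atMost_split: "(\<Sum>k\<le>n. g k) = (\<Sum>k<n. g k) + g (n::nat)"
  by (simp add: lessThan_Suc_atMost[symmetric])

lemma weyl_op_cong:
  assumes "\<And>k. k \<le> n \<Longrightarrow> p k = p' k" and "\<And>k. k \<le> n \<Longrightarrow> q k = q' k"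
  shows "weyl_op n p q c = weyl_op n p' q' c"
  unfolding weyl_op_def by (intro ext arg_cong2[where f="(+)"] sum.cong refl) (use assms in auto)

lemma weyl_op_lincomb:
  assumes "finite K"
  shows "(\<lambda>M. \<Sum>k\<in>K. a k * weyl_op n (p k) (q k) (c k) \<phi> M) =
    weyl_op n (\<lambda>l. \<Sum>k\<in>K. a k * p k l) (\<lambda>l. \<Sum>k\<in>K. a k * q k l) (\<Sum>k\<in>K. a k * c k) \<phi>"
proof
  fix M
  have "(\<Sum>k\<in>K. a k * weyl_op n (p k) (q k) (c k) \<phi> M) =
     (\<Sum>k\<in>K. (\<Sum>l\<le>n. a k * p k l * mul_var (Suc n) (diff_var l \<phi>) M)
        + (\<Sum>l\<le>n. a k * q k l * mul_var l \<phi> M) + a k * c k * mul_var (Suc n) \<phi> M)"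
    by (simp add: weyl_op_def distrib_left sum_distrib_left mult.assoc)
  also have "\<dots> = (\<Sum>l\<le>n. (\<Sum>k\<in>K. a k * p k l) * mul_var (Suc n) (diff_var l \<phi>) M)
      + (\<Sum>l\<le>n. (\<Sum>k\<in>K. a k * q k l) * mul_var l \<phi> M) + (\<Sum>k\<in>K. a k * c k) * mul_var (Suc n) \<phi> M"
    by (simp add: sum.distrib sum_distrib_right sum.swap[of _ K])
  finally show "(\<Sum>k\<in>K. a k * weyl_op n (p k) (q k) (c k) \<phi> M) =
      weyl_op n (\<lambda>l. \<Sum>k\<in>K. a k * p k l) (\<lambda>l. \<Sum>k\<in>K. a k * q k l) (\<Sum>k\<in>K. a k * c k) \<phi> M"
    by (simp add: weyl_op_def)
qed

lemma diff_var_weyl_op: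
  assumes l: "l \<le> n"
  shows "diff_var l (weyl_op n p q c \<phi>) = (\<lambda>M. weyl_op n p q c (diff_var l \<phi>) M + q l * \<phi> M)"
proof -
  have 1: "\<And>k. diff_var l (mul_var (Suc n) (diff_var k \<phi>)) = mul_var (Suc n) (diff_var k (diff_var l \<phi>))"
    using l by (simp add: diff_mul_var_other diff_var_commute)
  have 2: "\<And>k. diff_var l (mul_var k \<phi>) = (\<lambda>M. mul_var k (diff_var l \<phi>) M + (if k = l then \<phi> M else 0))"
    by (rule ext) (simp add: diff_mul_var_same diff_mul_var_other)
  have 3: "diff_var l (mul_var (Suc n) \<phi>) = mul_var (Suc n) (diff_var l \<phi>)"
    using l by (simp add: diff_mul_var_other)
  show ?thesis
    apply (rule ext)
    apply (simp only: weyl_op_def var_op_linear 1 3)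
    apply (simp add: 2 distrib_left sum.distrib l)
    apply (simp add: if_distrib[of "\<lambda>x. q _ * x"] sum.delta l cong: if_cong)
    done
qed

lemma mul_var_weyl_op:
  assumes m: "m \<le> n"
  shows "mul_var m (weyl_op n p q c \<phi>) = (\<lambda>M. weyl_op n p q c (mul_var m \<phi>) M - p m * mul_var (Suc n) \<phi> M)"
proof -
  have "mul_var m (diff_var k \<phi>) = (\<lambda>M. diff_var k (mul_var m \<phi>) M - (if k = m then \<phi> M else 0))" for k
    by (rule ext) (cases "k = m"; simp add: diff_mul_var_same diff_mul_var_other)
  then have 1: "\<And>k. mul_var m (mul_var (Suc n) (diff_var k \<phi>))
      = mul_var (Suc n) (\<lambda>M. diff_var k (mul_var m \<phi>) M - (if k = m then \<phi> M else 0))"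
    by (simp add: mul_var_commute[of m "Suc n"])
  have 2: "\<And>k. mul_var m (mul_var k \<phi>) = mul_var k (mul_var m \<phi>)"
    by (rule mul_var_commute)
  have 3: "mul_var m (mul_var (Suc n) \<phi>) = mul_var (Suc n) (mul_var m \<phi>)"
    by (rule mul_var_commute)
  have 4: "\<And>k. mul_var (Suc n) (\<lambda>M. if k = m then \<phi> M else 0) = (\<lambda>M. if k = m then mul_var (Suc n) \<phi> M else 0)"
    by (rule ext) (simp add: mul_var_def)
  show ?thesis
    apply (rule ext)
    apply (simp only: weyl_op_def var_op_linear 1 3)
    apply (simp add: 2 4 var_op_linear right_diff_distrib sum_subtractf m)
    apply (simp add: if_distrib[of "\<lambda>x. p _ * x"] sum.delta m cong: if_cong)
    done
qed

lemma mul_z_weyl_op: "mul_var (Suc n) (weyl_op n p q c \<phi>) = weyl_op n p q c (mul_var (Suc n) \<phi>)"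
proof -
  have "\<And>k. k \<le> n \<Longrightarrow> mul_var (Suc n) (diff_var k \<phi>) = diff_var k (mul_var (Suc n) \<phi>)"
    by (simp add: diff_mul_var_other)
  moreover have "\<And>k. mul_var (Suc n) (mul_var k \<phi>) = mul_var k (mul_var (Suc n) \<phi>)"
    by (rule mul_var_commute)
  ultimately show ?thesis
    unfolding weyl_op_def var_op_linear by (intro ext arg_cong2[where f="(+)"] sum.cong refl) simp_all
qed

lemma weyl_op_commutator: "weyl_op n p q c (weyl_op n p' q' c' \<phi>) =
   (\<lambda>M. weyl_op n p' q' c' (weyl_op n p q c \<phi>) M
        + (\<Sum>k\<le>n. p k * q' k - p' k * q k) * mul_var (Suc n) \<phi> M)"
proof
  fix M
  let ?o = "weyl_op n p' q' c'"
  have D: "?o (weyl_op n p q c \<phi>) = (\<lambda>M. (\<Sum>k\<le>n. p k * ?o (mul_var (Suc n) (diff_var k \<phi>)) M)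
      + (\<Sum>k\<le>n. q k * ?o (mul_var k \<phi>) M) + c * ?o (mul_var (Suc n) \<phi>) M)"
    by (simp add: weyl_op_def[of n p q c] weyl_op_add weyl_op_scale weyl_op_sum)
  have S1: "(\<Sum>k\<le>n. p k * mul_var (Suc n) (diff_var k (?o \<phi>)) M)
      = (\<Sum>k\<le>n. p k * (?o (mul_var (Suc n) (diff_var k \<phi>)) M + q' k * mul_var (Suc n) \<phi> M))"
    by (intro sum.cong) (simp_all add: diff_var_weyl_op var_op_linear mul_z_weyl_op)
  have S2: "(\<Sum>k\<le>n. q k * mul_var k (?o \<phi>) M)
      = (\<Sum>k\<le>n. q k * (?o (mul_var k \<phi>) M - p' k * mul_var (Suc n) \<phi> M))"
    by (intro sum.cong) (simp_all add: mul_var_weyl_op)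
  show "weyl_op n p q c (?o \<phi>) M
      = ?o (weyl_op n p q c \<phi>) M + (\<Sum>k\<le>n. p k * q' k - p' k * q k) * mul_var (Suc n) \<phi> M"
    apply (subst weyl_op_def)
    apply (simp only: D mul_z_weyl_op S1 S2)
    apply (simp add: algebra_simps sum.distrib sum_subtractf sum_distrib_right)
    apply (simp add: sum_distrib_left mult.assoc)
    apply (subst add.commute)
    apply (intro arg_cong2[where f="(+)"] sum.cong refl)
     apply (simp_all add: ac_simps)
    done
qed

definition series_linear :: "(series \<Rightarrow> series) \<Rightarrow> bool" where
  "series_linear T \<longleftrightarrow> (\<forall>\<phi> \<psi>. T (\<lambda>M. \<phi> M + \<psi> M) = (\<lambda>M. T \<phi> M + T \<psi> M)) \<and>
             (\<forall>c \<phi>. T (\<lambda>M. c * \<phi> M) = (\<lambda>M. c * T \<phi> M))"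

lemma series_linear_add: "series_linear T \<Longrightarrow> T (\<lambda>M. \<phi> M + \<psi> M) = (\<lambda>M. T \<phi> M + T \<psi> M)"
  by (simp add: series_linear_def)

lemma series_linear_scale: "series_linear T \<Longrightarrow> T (\<lambda>M. c * \<phi> M) = (\<lambda>M. c * T \<phi> M)"
  by (simp add: series_linear_def)

lemma series_linear_zero: "series_linear T \<Longrightarrow> T (\<lambda>M. 0) = (\<lambda>M. 0)"
  using series_linear_scale[of T 0 "\<lambda>M. 0"] by simp

lemma series_linear_lincomb:
  assumes l: "series_linear T" and "finite I"
  shows "T (\<lambda>M. \<Sum>i\<in>I. g i * \<psi> i M) = (\<lambda>M. \<Sum>i\<in>I. g i * T (\<psi> i) M)"
  using \<open>finite I\<close>
proof (induction I rule: finite_induct)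
  case empty
  then show ?case by (simp add: series_linear_zero[OF l])
next
  case (insert x F)
  have "T (\<lambda>M. \<Sum>i\<in>insert x F. g i * \<psi> i M) = T (\<lambda>M. g x * \<psi> x M + (\<Sum>i\<in>F. g i * \<psi> i M))"
    using insert by simp
  also have "\<dots> = (\<lambda>M. g x * T (\<psi> x) M + (\<Sum>i\<in>F. g i * T (\<psi> i) M))"
    using insert by (simp add: series_linear_add[OF l] series_linear_scale[OF l])
  finally show ?case using insert by simp
qed

lemma series_linear_weyl_op: "series_linear (weyl_op n p q c)"
  unfolding series_linear_def by (simp add: weyl_op_add weyl_op_scale)

fun word_act :: "(nat \<Rightarrow> series \<Rightarrow> series) \<Rightarrow> nat list \<Rightarrow> series \<Rightarrow> series" where
  "word_act \<rho> [] \<phi> = \<phi>"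
| "word_act \<rho> (i # w) \<phi> = \<rho> i (word_act \<rho> w \<phi>)"

lemma word_act_append: "word_act \<rho> (u @ v) \<phi> = word_act \<rho> u (word_act \<rho> v \<phi>)"
  by (induction u) simp_all

lemma series_linear_word_act: "(\<And>i. series_linear (\<rho> i)) \<Longrightarrow> series_linear (word_act \<rho> w)"
  by (induction w) (simp_all add: series_linear_def)

definition fa_act :: "(nat \<Rightarrow> series \<Rightarrow> series) \<Rightarrow> fa \<Rightarrow> series \<Rightarrow> series" where
  "fa_act \<rho> a \<phi> = (\<lambda>M. \<Sum>w\<in>supp a. a w * word_act \<rho> w \<phi> M)"

lemma fa_act_eq_sum_superset:
  "finite S \<Longrightarrow> supp a \<subseteq> S \<Longrightarrow> fa_act \<rho> a \<phi> = (\<lambda>M. \<Sum>w\<in>S. a w * word_act \<rho> w \<phi> M)"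
  unfolding fa_act_def by (rule ext, rule sum.mono_neutral_left) (auto simp: supp_def)

lemma series_linear_fa_act: "(\<And>i. series_linear (\<rho> i)) \<Longrightarrow> series_linear (fa_act \<rho> a)"
  using series_linear_word_act[of \<rho>] unfolding series_linear_def fa_act_def
  by (simp add: sum.distrib distrib_left sum_distrib_left mult.left_commute)

lemma fa_act_mult:
  assumes fa: "finite (supp a)" and fb: "finite (supp b)" and l: "\<And>i. series_linear (\<rho> i)"
  shows "fa_act \<rho> (fa_mult a b) \<phi> = fa_act \<rho> a (fa_act \<rho> b \<phi>)"
proof
  fix M
  let ?T = "(\<lambda>x. fst x @ snd x) ` (supp a \<times> supp b)"
  let ?F = "\<lambda>w. {x\<in>supp a \<times> supp b. fst x @ snd x = w}"
  have fT: "finite ?T" using fa fb by auto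
  have "fa_act \<rho> (fa_mult a b) \<phi> M = (\<Sum>w\<in>?T. fa_mult a b w * word_act \<rho> w \<phi> M)"
    by (simp add: fa_act_eq_sum_superset[OF fT supp_fa_mult[OF fa fb]])
  also have "\<dots> = (\<Sum>w\<in>?T. \<Sum>x\<in>?F w. a (fst x) * b (snd x) * word_act \<rho> w \<phi> M)"
    by (simp add: fa_mult_factorization_sum[OF fa fb order_refl order_refl] sum_distrib_right)
  also have "\<dots> = (\<Sum>w\<in>?T. \<Sum>x\<in>?F w. a (fst x) * b (snd x) * word_act \<rho> (fst x @ snd x) \<phi> M)"
    by (intro sum.cong refl) auto
  also have "\<dots> = (\<Sum>x\<in>supp a \<times> supp b. a (fst x) * b (snd x) * word_act \<rho> (fst x @ snd x) \<phi> M)"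
    by (rule sum.group) (use fa fb in auto)
  also have "\<dots> = (\<Sum>u\<in>supp a. \<Sum>v\<in>supp b. a u * b v * word_act \<rho> u (word_act \<rho> v \<phi>) M)"
    by (simp add: sum.cartesian_product word_act_append case_prod_beta)
  also have "\<dots> = (\<Sum>u\<in>supp a. a u * word_act \<rho> u (\<lambda>M. \<Sum>v\<in>supp b. b v * word_act \<rho> v \<phi> M) M)"
    by (simp add: series_linear_lincomb[OF series_linear_word_act[OF l] fb] sum_distrib_left mult.assoc)
  also have "\<dots> = fa_act \<rho> a (fa_act \<rho> b \<phi>) M"
    by (simp add: fa_act_def)
  finally show "fa_act \<rho> (fa_mult a b) \<phi> M = fa_act \<rho> a (fa_act \<rho> b \<phi>) M" .
qed

lemma fa_act_one: "fa_act \<rho> fa_one \<phi> = \<phi>"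
  by (subst fa_act_eq_sum_superset[of "{[]}"]) (auto simp: supp_def fa_one_def)

lemma fa_act_gen: "fa_act \<rho> (fa_gen i) \<phi> = \<rho> i \<phi>"
  by (subst fa_act_eq_sum_superset[of "{[i]}"]) (auto simp: supp_def fa_gen_def)

lemma fa_act_zero: "fa_act \<rho> (\<lambda>_. 0) \<phi> = (\<lambda>M. 0)"
  by (simp add: fa_act_def supp_def)

lemma fa_act_lincomb:
  assumes fV: "finite V" and fh: "\<And>v. v \<in> V \<Longrightarrow> finite (supp (h v))"
  shows "fa_act \<rho> (\<lambda>w. \<Sum>v\<in>V. g v * h v w) \<phi> = (\<lambda>M. \<Sum>v\<in>V. g v * fa_act \<rho> (h v) \<phi> M)"
proof
  fix M
  let ?S = "\<Union>v\<in>V. supp (h v)"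
  have fS: "finite ?S" using fV fh by auto
  have "supp (\<lambda>w. \<Sum>v\<in>V. g v * h v w) \<subseteq> ?S"
  proof
    fix w assume "w \<in> supp (\<lambda>w. \<Sum>v\<in>V. g v * h v w)"
    then obtain v where "v \<in> V" "g v * h v w \<noteq> 0"
      by (metis (mono_tags, lifting) mem_Collect_eq sum.neutral supp_def)
    then show "w \<in> ?S" by (auto simp: supp_def)
  qed
  then have "fa_act \<rho> (\<lambda>w. \<Sum>v\<in>V. g v * h v w) \<phi> M = (\<Sum>w\<in>?S. (\<Sum>v\<in>V. g v * h v w) * word_act \<rho> w \<phi> M)"
    using fa_act_eq_sum_superset[OF fS] by simp
  also have "\<dots> = (\<Sum>v\<in>V. g v * (\<Sum>w\<in>?S. h v w * word_act \<rho> w \<phi> M))"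
    by (simp add: sum_distrib_right sum_distrib_left sum.swap[of _ V] mult.assoc)
  also have "\<dots> = (\<Sum>v\<in>V. g v * fa_act \<rho> (h v) \<phi> M)"
  proof (intro sum.cong refl)
    fix v assume "v \<in> V"
    then have "supp (h v) \<subseteq> ?S" by auto
    then show "g v * (\<Sum>w\<in>?S. h v w * word_act \<rho> w \<phi> M) = g v * fa_act \<rho> (h v) \<phi> M"
      using fa_act_eq_sum_superset[OF fS] by simp
  qed
  finally show "fa_act \<rho> (\<lambda>w. \<Sum>v\<in>V. g v * h v w) \<phi> M = (\<Sum>v\<in>V. g v * fa_act \<rho> (h v) \<phi> M)" .
qed

lemma fa_act_add:
  assumes "finite (supp a)" "finite (supp b)"
  shows "fa_act \<rho> (fa_add a b) \<phi> = (\<lambda>M. fa_act \<rho> a \<phi> M + fa_act \<rho> b \<phi> M)"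
proof -
  have fS: "finite (supp a \<union> supp b)" using assms by auto
  have "fa_act \<rho> (fa_add a b) \<phi> = (\<lambda>M. \<Sum>w\<in>supp a \<union> supp b. fa_add a b w * word_act \<rho> w \<phi> M)"
    by (rule fa_act_eq_sum_superset[OF fS]) (auto simp: supp_def fa_add_def)
  moreover have "fa_act \<rho> x \<phi> = (\<lambda>M. \<Sum>w\<in>supp a \<union> supp b. x w * word_act \<rho> w \<phi> M)"
    if "x \<in> {a, b}" for x
    using that by (intro fa_act_eq_sum_superset[OF fS]) auto
  ultimately show ?thesis by (simp add: fa_add_def distrib_right sum.distrib)
qed

lemma fa_act_diff:
  assumes "finite (supp a)" "finite (supp b)"
  shows "fa_act \<rho> (fa_diff a b) \<phi> = (\<lambda>M. fa_act \<rho> a \<phi> M - fa_act \<rho> b \<phi> M)"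
proof -
  have fS: "finite (supp a \<union> supp b)" using assms by auto
  have "fa_act \<rho> (fa_diff a b) \<phi> = (\<lambda>M. \<Sum>w\<in>supp a \<union> supp b. fa_diff a b w * word_act \<rho> w \<phi> M)"
    by (rule fa_act_eq_sum_superset[OF fS]) (auto simp: supp_def fa_diff_def)
  moreover have "fa_act \<rho> x \<phi> = (\<lambda>M. \<Sum>w\<in>supp a \<union> supp b. x w * word_act \<rho> w \<phi> M)"
    if "x \<in> {a, b}" for x
    using that by (intro fa_act_eq_sum_superset[OF fS]) auto
  ultimately show ?thesis by (simp add: fa_diff_def left_diff_distrib sum_subtractf)
qed

lemma fa_act_scale:
  assumes "finite (supp a)"
  shows "fa_act \<rho> (fa_scale z a) \<phi> = (\<lambda>M. z * fa_act \<rho> a \<phi> M)"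
  by (subst fa_act_eq_sum_superset[OF assms])
    (auto simp: supp_def fa_scale_def fa_act_def sum_distrib_left mult.assoc)

(* Every Weyl operator raises this weight by at most one, since z counts twice. *)
definition weight :: "nat \<Rightarrow> monom \<Rightarrow> nat" where
  "weight n M = (\<Sum>k\<le>n. M k) + 2 * M (Suc n)"

definition vanishes_below :: "nat \<Rightarrow> nat \<Rightarrow> series \<Rightarrow> bool" where
  "vanishes_below n d \<phi> \<longleftrightarrow> (\<forall>M. weight n M < d \<longrightarrow> \<phi> M = 0)"

lemma weight_upd: "k \<le> n \<Longrightarrow> weight n (M(k := y)) + M k = weight n M + y"
proof -
  assume k: "k \<le> n"
  have "(\<Sum>i\<le>n. (M(k := y)) i) = y + (\<Sum>i\<in>{..n} - {k}. M i)"
    using k by (simp add: sum.remove[of _ k])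
  moreover have "(\<Sum>i\<le>n. M i) = M k + (\<Sum>i\<in>{..n} - {k}. M i)"
    using k by (simp add: sum.remove[of _ k])
  ultimately show ?thesis using k by (simp add: weight_def)
qed

lemma weight_upd_z: "weight n (M(Suc n := y)) + 2 * M (Suc n) = weight n M + 2 * y"
  by (simp add: weight_def)

lemma vanishes_below_mono: "d' \<le> d \<Longrightarrow> vanishes_below n d \<phi> \<Longrightarrow> vanishes_below n d' \<phi>"
  by (auto simp: vanishes_below_def)

lemma vanishes_below_mul_var:
  assumes "k \<le> n" "vanishes_below n d \<phi>"
  shows "vanishes_below n (Suc d) (mul_var k \<phi>)"
  unfolding vanishes_below_def
proof (intro allI impI)
  fix M assume "weight n M < Suc d"
  moreover have "weight n (M(k := M k - 1)) + M k = weight n M + (M k - 1)"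
    by (rule weight_upd[OF assms(1)])
  ultimately show "mul_var k \<phi> M = 0"
    using assms(2) by (auto simp: mul_var_def vanishes_below_def)
qed

lemma vanishes_below_mul_z:
  assumes "vanishes_below n d \<phi>"
  shows "vanishes_below n (Suc (Suc d)) (mul_var (Suc n) \<phi>)"
  unfolding vanishes_below_def
proof (intro allI impI)
  fix M assume "weight n M < Suc (Suc d)"
  moreover have "weight n (M(Suc n := M (Suc n) - 1)) + 2 * M (Suc n) = weight n M + 2 * (M (Suc n) - 1)"
    by (rule weight_upd_z)
  ultimately show "mul_var (Suc n) \<phi> M = 0"
    using assms by (auto simp: mul_var_def vanishes_below_def)
qed

lemma vanishes_below_diff_var:
  assumes "k \<le> n" "vanishes_below n d \<phi>"
  shows "vanishes_below n (d - 1) (diff_var k \<phi>)"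
  unfolding vanishes_below_def
proof (intro allI impI)
  fix M assume "weight n M < d - 1"
  moreover have "weight n (M(k := Suc (M k))) + M k = weight n M + Suc (M k)"
    by (rule weight_upd[OF assms(1)])
  ultimately show "diff_var k \<phi> M = 0"
    using assms(2) by (auto simp: diff_var_def vanishes_below_def)
qed

lemma vanishes_below_weyl_op:
  assumes "vanishes_below n d \<phi>"
  shows "vanishes_below n (Suc d) (weyl_op n p q c \<phi>)"
proof -
  have "vanishes_below n (Suc d) (mul_var (Suc n) (diff_var k \<phi>))" if "k \<le> n" for k
    using vanishes_below_mul_z[OF vanishes_below_diff_var[OF that assms]]
    by (rule vanishes_below_mono[rotated]) arith
  moreover have "vanishes_below n (Suc d) (mul_var k \<phi>)" if "k \<le> n" for k
    using vanishes_below_mul_var[OF that assms] .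
  moreover have "vanishes_below n (Suc d) (mul_var (Suc n) \<phi>)"
    using vanishes_below_mul_z[OF assms] by (rule vanishes_below_mono[rotated]) simp
  ultimately show ?thesis
    by (auto simp: vanishes_below_def weyl_op_def intro!: sum.neutral)
qed

definition one_series :: series where
  "one_series = (\<lambda>M. if M = (\<lambda>_. 0) then 1 else 0)"

lemma diff_var_one_series: "diff_var l one_series = (\<lambda>M. 0)"
  by (rule ext) (simp add: diff_var_def one_series_def fun_eq_iff, metis fun_upd_same nat.distinct(1))

definition xz_monom :: "nat \<Rightarrow> nat \<Rightarrow> nat \<Rightarrow> monom" where
  "xz_monom n m r = (\<lambda>k. if k = n then m else if k = Suc n then r else 0)"

definition xz_series :: "nat \<Rightarrow> nat \<Rightarrow> nat \<Rightarrow> series" where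
  "xz_series n m r = (\<lambda>M. if M = xz_monom n m r then 1 else 0)"

lemma xz_monom_eq_iff: "xz_monom n m r = xz_monom n m' r' \<longleftrightarrow> m = m' \<and> r = r'"
proof
  assume h: "xz_monom n m r = xz_monom n m' r'"
  show "m = m' \<and> r = r'"
    using fun_cong[OF h, of n] fun_cong[OF h, of "Suc n"] by (simp add: xz_monom_def)
qed simp

lemma one_series_eq_xz_series: "one_series = xz_series n 0 0"
  by (rule ext) (simp add: one_series_def xz_series_def xz_monom_def fun_eq_iff)

lemma mul_var_xz_series_x: "mul_var n (xz_series n m r) = xz_series n (Suc m) r"
proof
  fix M
  have "(M n \<noteq> 0 \<and> M(n := M n - 1) = xz_monom n m r) \<longleftrightarrow> M = xz_monom n (Suc m) r"
  proof
    assume h: "M n \<noteq> 0 \<and> M(n := M n - 1) = xz_monom n m r"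
    show "M = xz_monom n (Suc m) r"
    proof
      fix k
      have "(M(n := M n - 1)) k = xz_monom n m r k" using h by simp
      then show "M k = xz_monom n (Suc m) r k"
        using h by (cases "k = n") (auto simp: xz_monom_def split: if_splits)
    qed
  qed (auto simp: xz_monom_def)
  then show "mul_var n (xz_series n m r) M = xz_series n (Suc m) r M"
    by (auto simp: mul_var_def xz_series_def)
qed

lemma mul_var_xz_series_z: "mul_var (Suc n) (xz_series n m r) = xz_series n m (Suc r)"
proof
  fix M
  have "(M (Suc n) \<noteq> 0 \<and> M(Suc n := M (Suc n) - 1) = xz_monom n m r) \<longleftrightarrow> M = xz_monom n m (Suc r)"
  proof
    assume h: "M (Suc n) \<noteq> 0 \<and> M(Suc n := M (Suc n) - 1) = xz_monom n m r"
    show "M = xz_monom n m (Suc r)"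
    proof
      fix k
      have "(M(Suc n := M (Suc n) - 1)) k = xz_monom n m r k" using h by simp
      then show "M k = xz_monom n m (Suc r) k"
        using h by (cases "k = Suc n") (auto simp: xz_monom_def split: if_splits)
    qed
  qed (auto simp: xz_monom_def)
  then show "mul_var (Suc n) (xz_series n m r) M = xz_series n m (Suc r) M"
    by (auto simp: mul_var_def xz_series_def)
qed

lemma diff_var_xz_series_x: "diff_var n (xz_series n m r) = (\<lambda>M. of_nat m * xz_series n (m - 1) r M)"
proof
  fix M
  have "M(n := Suc (M n)) = xz_monom n m r \<longleftrightarrow> m \<noteq> 0 \<and> M = xz_monom n (m - 1) r"
  proof
    assume h: "M(n := Suc (M n)) = xz_monom n m r"
    have mn: "Suc (M n) = m" using fun_cong[OF h, of n] by (simp add: xz_monom_def)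
    show "m \<noteq> 0 \<and> M = xz_monom n (m - 1) r"
    proof
      show "M = xz_monom n (m - 1) r"
      proof
        fix k
        show "M k = xz_monom n (m - 1) r k"
          using mn fun_cong[OF h, of k] by (cases "k = n") (auto simp: xz_monom_def)
      qed
    qed (use mn in auto)
  qed (auto simp: xz_monom_def)
  then show "diff_var n (xz_series n m r) M = of_nat m * xz_series n (m - 1) r M"
    by (auto simp: diff_var_def xz_series_def xz_monom_def)
qed

lemma diff_var_xz_series_other: "k < n \<Longrightarrow> diff_var k (xz_series n m r) = (\<lambda>M. 0)"
proof
  fix M assume k: "k < n"
  have "M(k := Suc (M k)) \<noteq> xz_monom n m r"
    using k fun_upd_same[of M k "Suc (M k)"] by (metis nat.distinct(1) xz_monom_def nat_neq_iff less_SucI)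
  then show "diff_var k (xz_series n m r) M = 0" by (simp add: diff_var_def xz_series_def)
qed

lemma weyl_op_xz_series:
  assumes q: "\<forall>k<n. q k = 0"
  shows "weyl_op n p q c (xz_series n m r) = (\<lambda>M. p n * of_nat m * xz_series n (m - 1) (Suc r) M
      + q n * xz_series n (Suc m) r M + c * xz_series n m (Suc r) M)"
proof
  fix M
  have "(\<Sum>k\<le>n. p k * mul_var (Suc n) (diff_var k (xz_series n m r)) M)
      = p n * of_nat m * xz_series n (m - 1) (Suc r) M"
    by (simp add: lessThan_Suc_atMost[symmetric] diff_var_xz_series_other mul_var_zero
        diff_var_xz_series_x mul_var_scale mul_var_xz_series_z)
  moreover have "(\<Sum>k\<le>n. q k * mul_var k (xz_series n m r) M) = q n * xz_series n (Suc m) r M"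
    by (simp add: lessThan_Suc_atMost[symmetric] q mul_var_xz_series_x)
  ultimately show "weyl_op n p q c (xz_series n m r) M = p n * of_nat m * xz_series n (m - 1) (Suc r) M
      + q n * xz_series n (Suc m) r M + c * xz_series n m (Suc r) M"
    by (simp add: weyl_op_def mul_var_xz_series_z)
qed

section \<open>A Schroedinger-type representation\<close>

locale lie_functional =
  fixes c :: "nat \<Rightarrow> nat \<Rightarrow> nat \<Rightarrow> complex" and n :: nat and f :: "nat \<Rightarrow> complex" and i0 j0 :: nat
  assumes skew: "\<And>i j k. i < n \<Longrightarrow> j < n \<Longrightarrow> k < n \<Longrightarrow> c j i k = - c i j k"
    and vanishes_triple_brackets:
      "\<And>a i j. a < n \<Longrightarrow> i < n \<Longrightarrow> j < n \<Longrightarrow> (\<Sum>y<n. c i j y * (\<Sum>m<n. c a y m * f m)) = 0"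
    and normalized: "(\<Sum>k<n. c i0 j0 k * f k) = 1"
    and i0: "i0 < n" and j0: "j0 < n"
begin

definition bform :: "nat \<Rightarrow> nat \<Rightarrow> complex" where
  "bform a b = (\<Sum>m<n. c a b m * f m)"

lemma bform_bracket_right: "a < n \<Longrightarrow> i < n \<Longrightarrow> j < n \<Longrightarrow> (\<Sum>y<n. c i j y * bform a y) = 0"
  using vanishes_triple_brackets by (simp add: bform_def)

lemma bform_skew: "a < n \<Longrightarrow> b < n \<Longrightarrow> bform b a = - bform a b"
proof -
  assume "a < n" "b < n"
  then have "bform b a = (\<Sum>m<n. - (c a b m * f m))"
    unfolding bform_def by (intro sum.cong) (auto simp: skew[of a b])
  then show ?thesis by (simp add: bform_def sum_negf)
qed

lemma bform_diag: "a < n \<Longrightarrow> bform a a = 0"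
  using bform_skew[of a a] by simp

lemma bform_bracket_left: "a < n \<Longrightarrow> i < n \<Longrightarrow> j < n \<Longrightarrow> (\<Sum>y<n. c i j y * bform y a) = 0"
proof -
  assume "a < n" "i < n" "j < n"
  then have "(\<Sum>y<n. c i j y * bform y a) = - (\<Sum>y<n. c i j y * bform a y)"
    by (auto simp: bform_skew[of a] sum_negf[symmetric] intro!: sum.cong)
  then show ?thesis using bform_bracket_right \<open>a < n\<close> \<open>i < n\<close> \<open>j < n\<close> by simp
qed

lemma bform_i0_j0: "bform i0 j0 = 1"
  using normalized by (simp add: bform_def)

lemma bform_j0_i0: "bform j0 i0 = -1"
  using bform_skew[OF i0 j0] bform_i0_j0 by simp

(* In rho a, the coordinates k < n pair z d/dx_k with x_k; coordinate n is an extra canonical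
   pair on which e_i0 and e_j0 act, up to multiples of z, as -x_n and z d/dx_n. bform_corr removes
   its contribution, so the symplectic pairing of the coefficients of rho a and rho b is bform a b. *)
definition bform_corr :: "nat \<Rightarrow> nat \<Rightarrow> complex" where
  "bform_corr l a = bform l a - (bform i0 l * bform j0 a - bform j0 l * bform i0 a)"

definition pv :: "nat \<Rightarrow> nat \<Rightarrow> complex" where
  "pv a k = (if k < n then (if k = a then 1 else 0) else bform i0 a)"

definition qv :: "nat \<Rightarrow> nat \<Rightarrow> complex" where
  "qv a k = (if k < n then bform_corr k a / 2 else bform j0 a)"

definition rho :: "nat \<Rightarrow> series \<Rightarrow> series" where
  "rho a = weyl_op n (pv a) (qv a) (f a)"

lemma series_linear_rho: "series_linear (rho a)"
  by (simp add: rho_def series_linear_weyl_op)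

lemma symplectic_pv_qv:
  assumes a: "a < n" and b: "b < n"
  shows "(\<Sum>k\<le>n. pv a k * qv b k - pv b k * qv a k) = bform a b"
proof -
  have "(\<Sum>k\<le>n. pv a k * qv b k - pv b k * qv a k) = (\<Sum>k<n. pv a k * qv b k - pv b k * qv a k)
      + (bform i0 a * bform j0 b - bform i0 b * bform j0 a)"
    by (simp add: sum_atMost_split pv_def qv_def)
  also have "(\<Sum>k<n. pv a k * qv b k - pv b k * qv a k)
      = (\<Sum>k<n. (if k = a then qv b k else 0) - (if k = b then qv a k else 0))"
    by (intro sum.cong) (auto simp: pv_def)
  also have "\<dots> = bform_corr a b / 2 - bform_corr b a / 2"
    using a b by (simp add: sum_subtractf sum.delta qv_def)
  also have "\<dots> + (bform i0 a * bform j0 b - bform i0 b * bform j0 a) = bform a b"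
    using a b by (simp add: bform_corr_def bform_skew[of a b] field_simps)
  finally show ?thesis .
qed

lemma rho_commutator:
  "a < n \<Longrightarrow> b < n \<Longrightarrow> rho a (rho b \<phi>) = (\<lambda>M. rho b (rho a \<phi>) M + bform a b * mul_var (Suc n) \<phi> M)"
  unfolding rho_def by (subst weyl_op_commutator) (simp add: symplectic_pv_qv)

(* rho respects the relations of U(g) only on the joint kernel of the derivations
   sum_l c_ijl d/dx_l; this kernel contains 1 and is invariant under rho. *)
definition bracket_deriv :: "nat \<Rightarrow> nat \<Rightarrow> series \<Rightarrow> series" where
  "bracket_deriv i j \<phi> = (\<lambda>M. \<Sum>l<n. c i j l * diff_var l \<phi> M)"

definition bracket_kernel :: "series set" where
  "bracket_kernel = {\<phi>. \<forall>i j. i < n \<longrightarrow> j < n \<longrightarrow> bracket_deriv i j \<phi> = (\<lambda>M. 0)}"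

lemma series_linear_bracket_deriv: "series_linear (bracket_deriv i j)"
  unfolding series_linear_def bracket_deriv_def
  by (simp add: var_op_linear distrib_left sum.distrib mult.left_commute sum_distrib_left)

lemma bracket_sum_qv: "i < n \<Longrightarrow> j < n \<Longrightarrow> a < n \<Longrightarrow> (\<Sum>l<n. c i j l * qv a l) = 0"
proof -
  assume i: "i < n" and j: "j < n" and a: "a < n"
  have "(\<Sum>l<n. c i j l * qv a l) = (\<Sum>l<n. (c i j l * bform l a - (c i j l * bform i0 l) * bform j0 a
      + (c i j l * bform j0 l) * bform i0 a) / 2)"
    by (intro sum.cong) (auto simp: qv_def bform_corr_def algebra_simps)
  also have "\<dots> = ((\<Sum>l<n. c i j l * bform l a) - (\<Sum>l<n. c i j l * bform i0 l) * bform j0 a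
      + (\<Sum>l<n. c i j l * bform j0 l) * bform i0 a) / 2"
    by (simp add: sum_divide_distrib[symmetric] sum.distrib sum_subtractf sum_distrib_right)
  also have "\<dots> = 0"
    using bform_bracket_left[OF a i j] bform_bracket_right[OF i0 i j] bform_bracket_right[OF j0 i j] by simp
  finally show ?thesis .
qed

lemma bracket_deriv_rho:
  assumes "i < n" "j < n" "a < n"
  shows "bracket_deriv i j (rho a \<phi>) = rho a (bracket_deriv i j \<phi>)"
proof -
  have "bracket_deriv i j (rho a \<phi>) = (\<lambda>M. \<Sum>l<n. c i j l * (rho a (diff_var l \<phi>) M + qv a l * \<phi> M))"
    unfolding bracket_deriv_def rho_def by (intro ext sum.cong refl) (simp add: diff_var_weyl_op)
  also have "\<dots> = (\<lambda>M. (\<Sum>l<n. c i j l * rho a (diff_var l \<phi>) M) + (\<Sum>l<n. c i j l * qv a l) * \<phi> M)"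
    by (simp add: distrib_left sum.distrib sum_distrib_right mult.assoc)
  also have "\<dots> = rho a (bracket_deriv i j \<phi>)"
    unfolding bracket_deriv_def
    using bracket_sum_qv[OF assms] by (simp add: series_linear_lincomb[OF series_linear_rho])
  finally show ?thesis .
qed

lemma rho_bracket_kernel: "a < n \<Longrightarrow> \<phi> \<in> bracket_kernel \<Longrightarrow> rho a \<phi> \<in> bracket_kernel"
  unfolding bracket_kernel_def by (auto simp: bracket_deriv_rho series_linear_zero[OF series_linear_rho])

lemma word_act_bracket_kernel:
  "set w \<subseteq> {..<n} \<Longrightarrow> \<phi> \<in> bracket_kernel \<Longrightarrow> word_act rho w \<phi> \<in> bracket_kernel"
  by (induction w) (auto simp: rho_bracket_kernel)

lemma fa_act_bracket_kernel:
  assumes a: "a \<in> FA n" and \<phi>: "\<phi> \<in> bracket_kernel"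
  shows "fa_act rho a \<phi> \<in> bracket_kernel"
  unfolding bracket_kernel_def
proof (intro CollectI allI impI)
  fix i j assume "i < n" "j < n"
  have "word_act rho w \<phi> \<in> bracket_kernel" if "w \<in> supp a" for w
    using that a \<phi> by (intro word_act_bracket_kernel) (auto simp: FA_iff supp_def)
  then have "\<forall>w\<in>supp a. bracket_deriv i j (word_act rho w \<phi>) = (\<lambda>M. 0)"
    using \<open>i < n\<close> \<open>j < n\<close> by (simp add: bracket_kernel_def)
  then show "bracket_deriv i j (fa_act rho a \<phi>) = (\<lambda>M. 0)"
    unfolding fa_act_def
    by (simp add: series_linear_lincomb[OF series_linear_bracket_deriv finite_supp_FA[OF a]])
qed

lemma rho_lincomb_bracket:
  assumes i: "i < n" and j: "j < n"
  shows "(\<lambda>M. \<Sum>k<n. c i j k * rho k \<phi> M)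
    = (\<lambda>M. mul_var (Suc n) (bracket_deriv i j \<phi>) M + bform i j * mul_var (Suc n) \<phi> M)"
proof -
  have P: "(\<Sum>k<n. c i j k * pv k l) = (if l < n then c i j l else 0)" if "l \<le> n" for l
  proof (cases "l < n")
    case True
    then show ?thesis by (simp add: pv_def if_distrib[of "\<lambda>x. _ * x"] sum.delta cong: if_cong)
  next
    case False
    then show ?thesis using bform_bracket_right[OF i0 i j] by (simp add: pv_def)
  qed
  have Q: "(\<Sum>k<n. c i j k * qv k l) = 0" if "l \<le> n" for l
  proof (cases "l < n")
    case True
    have "(\<Sum>k<n. c i j k * qv k l) = (\<Sum>k<n. (c i j k * bform l k - (c i j k * bform j0 k) * bform i0 l
        + (c i j k * bform i0 k) * bform j0 l) / 2)"
      using True by (intro sum.cong) (auto simp: qv_def bform_corr_def algebra_simps)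
    also have "\<dots> = ((\<Sum>k<n. c i j k * bform l k) - (\<Sum>k<n. c i j k * bform j0 k) * bform i0 l
        + (\<Sum>k<n. c i j k * bform i0 k) * bform j0 l) / 2"
      by (simp add: sum_divide_distrib[symmetric] sum.distrib sum_subtractf sum_distrib_right)
    finally show ?thesis
      using bform_bracket_right[OF True i j] bform_bracket_right[OF i0 i j] bform_bracket_right[OF j0 i j] by simp
  next
    case False
    then show ?thesis using bform_bracket_right[OF j0 i j] by (simp add: qv_def)
  qed
  have "(\<lambda>M. \<Sum>k<n. c i j k * rho k \<phi> M)
      = weyl_op n (\<lambda>l. \<Sum>k<n. c i j k * pv k l) (\<lambda>l. \<Sum>k<n. c i j k * qv k l) (\<Sum>k<n. c i j k * f k) \<phi>"
    unfolding rho_def by (rule weyl_op_lincomb) simp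
  also have "\<dots> = weyl_op n (\<lambda>l. if l < n then c i j l else 0) (\<lambda>l. 0) (bform i j) \<phi>"
    unfolding bform_def[of i j, symmetric] by (rule fun_cong[OF weyl_op_cong]) (use P Q in auto)
  also have "\<dots> = (\<lambda>M. mul_var (Suc n) (bracket_deriv i j \<phi>) M + bform i j * mul_var (Suc n) \<phi> M)"
    by (rule ext) (simp add: weyl_op_def sum_atMost_split bracket_deriv_def var_op_linear)
  finally show ?thesis .
qed

lemma fa_act_ue_rel:
  assumes i: "i < n" and j: "j < n" and \<phi>: "\<phi> \<in> bracket_kernel"
  shows "fa_act rho (ue_rel c n i j) \<phi> = (\<lambda>M. 0)"
proof -
  let ?br = "\<lambda>w. \<Sum>k<n. c i j k * fa_gen k w"
  have fin_gen: "finite (supp (fa_gen k))" for k by (simp add: supp_def fa_gen_def)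
  have fin_br: "finite (supp ?br)"
    by (rule finite_supp_FA, rule FA_lincomb) (auto intro: FA_gen)
  have fin_ij: "finite (supp (fa_mult (fa_gen i) (fa_gen j)))" "finite (supp (fa_mult (fa_gen j) (fa_gen i)))"
    using i j by (auto intro!: finite_supp_FA[of _ n] FA_mult FA_gen)
  have "fa_act rho ?br \<phi> = (\<lambda>M. \<Sum>k<n. c i j k * rho k \<phi> M)"
    by (simp add: fa_act_lincomb fin_gen fa_act_gen)
  also have "\<dots> = (\<lambda>M. bform i j * mul_var (Suc n) \<phi> M)"
    using \<phi> i j by (simp add: rho_lincomb_bracket bracket_kernel_def var_op_linear)
  finally have "fa_act rho ?br \<phi> = (\<lambda>M. bform i j * mul_var (Suc n) \<phi> M)" .
  moreover have "fa_act rho (fa_diff (fa_mult (fa_gen i) (fa_gen j)) (fa_mult (fa_gen j) (fa_gen i))) \<phi>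
      = (\<lambda>M. rho i (rho j \<phi>) M - rho j (rho i \<phi>) M)"
    by (simp add: fa_act_diff fin_ij fa_act_mult fin_gen series_linear_rho fa_act_gen)
  moreover have "finite (supp (fa_diff (fa_mult (fa_gen i) (fa_gen j)) (fa_mult (fa_gen j) (fa_gen i))))"
    using i j by (auto intro!: finite_supp_FA[of _ n] FA_diff FA_mult FA_gen)
  ultimately show ?thesis
    unfolding ue_rel_def by (simp add: fa_act_diff fin_br rho_commutator[OF i j])
qed

lemma fa_act_ue_ideal: "x \<in> ue_ideal c n \<Longrightarrow> \<phi> \<in> bracket_kernel \<Longrightarrow> fa_act rho x \<phi> = (\<lambda>M. 0)"
proof (induction arbitrary: \<phi> rule: ue_ideal.induct)
  case (add a b)
  have "finite (supp a)" "finite (supp b)"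
    using add.hyps by (auto intro: finite_supp_FA ue_ideal_in_FA)
  then show ?case using add.IH add.prems by (simp add: fa_act_add)
next
  case (mult_left a b)
  have "finite (supp a)" "finite (supp b)"
    using mult_left.hyps by (auto intro: finite_supp_FA ue_ideal_in_FA)
  then show ?case using mult_left.IH mult_left.prems
    by (simp add: fa_act_mult series_linear_rho series_linear_zero[OF series_linear_fa_act])
next
  case (mult_right a b)
  have "finite (supp a)" "finite (supp b)"
    using mult_right.hyps by (auto intro: finite_supp_FA ue_ideal_in_FA)
  then show ?case using mult_right.IH mult_right.prems mult_right.hyps(1)
    by (simp add: fa_act_mult series_linear_rho fa_act_bracket_kernel)
qed (simp_all add: fa_act_ue_rel fa_act_zero)

end

context lie_functional
begin

lemma vanishes_below_word_act_one: "vanishes_below n (length w) (word_act rho w one_series)"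
proof (induction w)
  case Nil
  then show ?case by (simp add: vanishes_below_def)
next
  case (Cons a w)
  then show ?case by (simp add: rho_def vanishes_below_weyl_op)
qed

lemma one_series_bracket_kernel: "one_series \<in> bracket_kernel"
  by (simp add: bracket_kernel_def bracket_deriv_def diff_var_one_series)

definition word_bound :: "monom \<Rightarrow> real" where
  "word_bound M = (\<Sum>w\<in>{w. set w \<subseteq> {..<n} \<and> length w \<le> weight n M}. cmod (word_act rho w one_series M))"

lemma word_bound_nonneg: "0 \<le> word_bound M"
  unfolding word_bound_def by (rule sum_nonneg) auto

lemma word_act_one_series_le: "set w \<subseteq> {..<n} \<Longrightarrow> cmod (word_act rho w one_series M) \<le> word_bound M"
proof (cases "length w \<le> weight n M")
  case True
  moreover assume "set w \<subseteq> {..<n}"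
  moreover have "finite {w. set w \<subseteq> {..<n} \<and> length w \<le> weight n M}"
    by (rule finite_lists_length_le) simp
  ultimately show ?thesis
    unfolding word_bound_def by (intro member_le_sum[where f="\<lambda>w. cmod (word_act rho w one_series M)"]) auto
next
  case False
  then show ?thesis
    using vanishes_below_word_act_one[of w] word_bound_nonneg by (simp add: vanishes_below_def)
qed

lemma fa_act_one_series_le:
  assumes a: "a \<in> FA n"
  shows "cmod (fa_act rho a one_series M) \<le> word_bound M * l1_norm a"
proof -
  have "cmod (fa_act rho a one_series M) \<le> (\<Sum>w\<in>supp a. cmod (a w) * cmod (word_act rho w one_series M))"
    unfolding fa_act_def by (rule order_trans[OF norm_sum]) (simp add: norm_mult)
  also have "\<dots> \<le> (\<Sum>w\<in>supp a. cmod (a w) * word_bound M)"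
    using a by (intro sum_mono mult_left_mono word_act_one_series_le) (auto simp: FA_iff supp_def)
  also have "\<dots> = word_bound M * l1_norm a"
    by (simp add: l1_norm_def sum_distrib_right mult.commute)
  finally show ?thesis .
qed

lemma quot_norm_pos:
  assumes a: "a \<in> FA n" and nz: "fa_act rho a one_series M \<noteq> 0"
  shows "0 < quot_norm c n a"
proof -
  have "cmod (fa_act rho a one_series M) / (word_bound M + 1) \<le> quot_norm c n a"
  proof (rule quot_norm_greatest)
    fix j assume j: "j \<in> ue_ideal c n"
    then have jF: "j \<in> FA n" by (rule ue_ideal_in_FA)
    have "fa_act rho (fa_diff a j) one_series M = fa_act rho a one_series M"
      using a jF fa_act_ue_ideal[OF j one_series_bracket_kernel]
      by (simp add: fa_act_diff finite_supp_FA)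
    then have "cmod (fa_act rho a one_series M) \<le> word_bound M * l1_norm (fa_diff a j)"
      using fa_act_one_series_le[OF FA_diff[OF a jF], of M] by simp
    also have "\<dots> \<le> (word_bound M + 1) * l1_norm (fa_diff a j)"
      by (intro mult_right_mono l1_norm_nonneg) simp
    finally show "cmod (fa_act rho a one_series M) / (word_bound M + 1) \<le> l1_norm (fa_diff a j)"
      using word_bound_nonneg[of M] by (simp add: field_simps)
  qed
  moreover have "0 < cmod (fa_act rho a one_series M) / (word_bound M + 1)"
    using nz word_bound_nonneg[of M] by simp
  ultimately show ?thesis by linarith
qed

end

section \<open>Elements of U(g) separating words\<close>

context lie_functional
begin

lemma bform_corr_i0: "k < n \<Longrightarrow> bform_corr k i0 = 0"
  using bform_skew[OF i0, of k] bform_j0_i0 bform_diag[OF i0] by (simp add: bform_corr_def)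

lemma bform_corr_j0: "k < n \<Longrightarrow> bform_corr k j0 = 0"
  using bform_skew[OF j0, of k] bform_i0_j0 bform_diag[OF j0] by (simp add: bform_corr_def)

lemma rho_i0_xz_series:
  "rho i0 (xz_series n m r) = (\<lambda>M. - xz_series n (Suc m) r M + f i0 * xz_series n m (Suc r) M)"
  unfolding rho_def
  by (subst weyl_op_xz_series) (simp_all add: qv_def pv_def bform_corr_i0 bform_diag[OF i0] bform_j0_i0)

lemma rho_j0_xz_series:
  "rho j0 (xz_series n m r) = (\<lambda>M. of_nat m * xz_series n (m - 1) (Suc r) M + f j0 * xz_series n m (Suc r) M)"
  unfolding rho_def
  by (subst weyl_op_xz_series) (simp_all add: qv_def pv_def bform_corr_j0 bform_diag[OF j0] bform_i0_j0)

definition zel :: fa where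
  "zel = fa_diff (fa_mult (fa_gen i0) (fa_gen j0)) (fa_mult (fa_gen j0) (fa_gen i0))"

definition xel :: fa where
  "xel = fa_scale (-1) (fa_diff (fa_gen i0) (fa_scale (f i0) zel))"

definition yel :: fa where
  "yel = fa_diff (fa_gen j0) (fa_scale (f j0) zel)"

definition euler_el :: fa where
  "euler_el = fa_mult xel yel"

lemma zel_FA: "zel \<in> FA n"
  unfolding zel_def using i0 j0 by (intro FA_diff FA_mult FA_gen)

lemma xel_FA: "xel \<in> FA n"
  unfolding xel_def using i0 by (intro FA_scale FA_diff FA_gen zel_FA)

lemma yel_FA: "yel \<in> FA n"
  unfolding yel_def using j0 by (intro FA_scale FA_diff FA_gen zel_FA)

lemma euler_el_FA: "euler_el \<in> FA n"
  unfolding euler_el_def by (intro FA_mult xel_FA yel_FA)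

lemma fa_act_zel: "fa_act rho zel \<phi> = mul_var (Suc n) \<phi>"
proof -
  have g: "finite (supp (fa_gen k))" for k by (simp add: supp_def fa_gen_def)
  have "finite (supp (fa_mult (fa_gen i0) (fa_gen j0)))" "finite (supp (fa_mult (fa_gen j0) (fa_gen i0)))"
    using i0 j0 by (auto intro!: finite_supp_FA[of _ n] FA_mult FA_gen)
  then show ?thesis unfolding zel_def
    by (simp add: fa_act_diff fa_act_mult g series_linear_rho fa_act_gen rho_commutator[OF i0 j0] bform_i0_j0)
qed

lemma fa_act_xel: "fa_act rho xel (xz_series n m r) = xz_series n (Suc m) r"
  unfolding xel_def using zel_FA i0
  by (simp add: fa_act_scale fa_act_diff finite_supp_FA[of _ n] FA_scale FA_diff FA_gen fa_act_gen fa_act_zel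
      rho_i0_xz_series mul_var_xz_series_z)

lemma fa_act_yel: "fa_act rho yel (xz_series n m r) = (\<lambda>M. of_nat m * xz_series n (m - 1) (Suc r) M)"
  unfolding yel_def using zel_FA j0
  by (simp add: fa_act_scale fa_act_diff finite_supp_FA[of _ n] FA_scale FA_diff FA_gen fa_act_gen fa_act_zel
      rho_j0_xz_series mul_var_xz_series_z)

lemma fa_act_euler_el: "fa_act rho euler_el (xz_series n m r) = (\<lambda>M. of_nat m * xz_series n m (Suc r) M)"
proof -
  have "fa_act rho euler_el (xz_series n m r) = fa_act rho xel (\<lambda>M. of_nat m * xz_series n (m - 1) (Suc r) M)"
    unfolding euler_el_def using xel_FA yel_FA
    by (simp add: fa_act_mult finite_supp_FA[of _ n] series_linear_rho fa_act_yel)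
  also have "\<dots> = (\<lambda>M. of_nat m * fa_act rho xel (xz_series n (m - 1) (Suc r)) M)"
    by (rule series_linear_scale[OF series_linear_fa_act[OF series_linear_rho]])
  also have "\<dots> = (\<lambda>M. of_nat m * xz_series n m (Suc r) M)"
    by (cases m) (simp_all add: fa_act_xel)
  finally show ?thesis .
qed

(* On x_n^m z^r, euler_el acts as m z and zel as z. eigen_proj L k is the Lagrange interpolation
   polynomial in them vanishing at the eigenvalues i \<noteq> k, i \<le> L; so for m \<le> L it maps
   x_n^m z^r to [m = k] x_n^m z^(r+L). *)
definition lagrange_factor :: "nat \<Rightarrow> nat \<Rightarrow> fa" where
  "lagrange_factor k i = fa_scale (1 / (of_nat k - of_nat i)) (fa_diff euler_el (fa_scale (of_nat i) zel))"

definition eigen_proj :: "nat \<Rightarrow> nat \<Rightarrow> fa" where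
  "eigen_proj L k = fa_prod (map (lagrange_factor k) (filter (\<lambda>i. i \<noteq> k) [0..<Suc L]))"

lemma lagrange_factor_FA: "lagrange_factor k i \<in> FA n"
  unfolding lagrange_factor_def by (intro FA_scale FA_diff euler_el_FA zel_FA)

lemma eigen_proj_FA: "eigen_proj L k \<in> FA n"
  unfolding eigen_proj_def by (intro FA_prod) (auto intro: lagrange_factor_FA)

lemma fa_act_lagrange_factor: "fa_act rho (lagrange_factor k i) (xz_series n m r)
    = (\<lambda>M. ((of_nat m - of_nat i) / (of_nat k - of_nat i)) * xz_series n m (Suc r) M)"
  unfolding lagrange_factor_def using euler_el_FA zel_FA
  by (simp add: fa_act_scale fa_act_diff finite_supp_FA[of _ n] FA_scale FA_diff fa_act_euler_el fa_act_zel
      mul_var_xz_series_z field_simps)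

lemma fa_act_prod_diagonal:
  assumes FA: "\<And>i. F i \<in> FA n"
    and act: "\<And>i m r. fa_act rho (F i) (xz_series n m r) = (\<lambda>M. G i m * xz_series n m (Suc r) M)"
  shows "fa_act rho (fa_prod (map F is)) (xz_series n m r)
    = (\<lambda>M. prod_list (map (\<lambda>i. G i m) is) * xz_series n m (r + length is) M)"
proof (induction "is")
  case Nil
  then show ?case by (simp add: fa_act_one)
next
  case (Cons i "is")
  have "fa_prod (map F is) \<in> FA n" using FA by (intro FA_prod) auto
  then have "fa_act rho (fa_prod (map F (i # is))) (xz_series n m r)
      = fa_act rho (F i) (fa_act rho (fa_prod (map F is)) (xz_series n m r))"
    using FA by (simp add: fa_act_mult finite_supp_FA[of _ n] series_linear_rho)
  also have "\<dots> = (\<lambda>M. prod_list (map (\<lambda>i. G i m) is) * fa_act rho (F i) (xz_series n m (r + length is)) M)"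
    unfolding Cons.IH by (rule series_linear_scale[OF series_linear_fa_act[OF series_linear_rho]])
  also have "\<dots> = (\<lambda>M. prod_list (map (\<lambda>i. G i m) (i # is)) * xz_series n m (r + length (i # is)) M)"
    by (simp add: act algebra_simps)
  finally show ?case .
qed

lemma fa_act_eigen_proj:
  assumes m: "m \<le> L" and k: "k \<le> L"
  shows "fa_act rho (eigen_proj L k) (xz_series n m r) = (\<lambda>M. (if m = k then 1 else 0) * xz_series n m (r + L) M)"
proof -
  let ?is = "filter (\<lambda>i. i \<noteq> k) [0..<Suc L]"
  let ?G = "\<lambda>i. (of_nat m - of_nat i) / (of_nat k - of_nat i) :: complex"
  have "fa_act rho (eigen_proj L k) (xz_series n m r)
      = (\<lambda>M. prod_list (map ?G ?is) * xz_series n m (r + length ?is) M)"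
    unfolding eigen_proj_def by (rule fa_act_prod_diagonal[OF lagrange_factor_FA fa_act_lagrange_factor])
  also have "length ?is = L"
    using k by (induction L) auto
  also have "prod_list (map ?G ?is) = (\<Prod>i\<in>set ?is. ?G i)"
    by (rule prod.distinct_set_conv_list[symmetric]) simp
  also have "\<dots> = (if m = k then 1 else 0)"
  proof (cases "m = k")
    case False
    then have "m \<in> set ?is" using m by auto
    then show ?thesis using False by (auto intro: prod_zero)
  qed (auto intro: prod.neutral)
  finally show ?thesis .
qed

(* shift v j raises the x_n-degree m to m + 1 exactly when the m-th letter of rev v is j. *)
definition shift :: "nat list \<Rightarrow> nat \<Rightarrow> fa" where
  "shift v j = fa_mult xel (\<lambda>w. \<Sum>k\<in>{k. k < length v \<and> rev v ! k = j}. 1 * eigen_proj (length v) k w)"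

lemma shift_FA: "shift v j \<in> FA n"
  unfolding shift_def by (intro FA_mult xel_FA FA_lincomb) (auto intro: eigen_proj_FA)

lemma fa_act_shift:
  assumes m: "m \<le> length v"
  shows "fa_act rho (shift v j) (xz_series n m r)
    = (\<lambda>M. (if m < length v \<and> rev v ! m = j then 1 else 0) * xz_series n (Suc m) (r + length v) M)"
proof -
  let ?K = "{k. k < length v \<and> rev v ! k = j}"
  let ?sum = "\<lambda>w. \<Sum>k\<in>?K. 1 * eigen_proj (length v) k w"
  have "fa_act rho ?sum (xz_series n m r) = (\<lambda>M. \<Sum>k\<in>?K. 1 * fa_act rho (eigen_proj (length v) k) (xz_series n m r) M)"
    by (rule fa_act_lincomb) (auto intro: finite_supp_FA eigen_proj_FA)
  also have "\<dots> = (\<lambda>M. \<Sum>k\<in>?K. if m = k then xz_series n m (r + length v) M else 0)"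
    using m by (intro ext sum.cong refl) (simp add: fa_act_eigen_proj)
  also have "\<dots> = (\<lambda>M. (if m \<in> ?K then 1 else 0) * xz_series n m (r + length v) M)"
    using finite_subset[of ?K "{..<length v}"] by (auto simp: sum.delta' fun_eq_iff)
  finally have "fa_act rho ?sum (xz_series n m r) = \<dots>" .
  moreover have "?sum \<in> FA n" by (intro FA_lincomb) (auto intro: eigen_proj_FA)
  ultimately show ?thesis
    unfolding shift_def using xel_FA
    by (simp add: fa_act_mult finite_supp_FA[of _ n] series_linear_rho
        series_linear_scale[OF series_linear_fa_act[OF series_linear_rho]] fa_act_xel)
qed

lemma fa_act_shift_word:
  assumes m: "m \<le> length v"
  shows "fa_act rho (fa_prod (map (shift v) u)) (xz_series n m r) =
    (\<lambda>M. (if m + length u \<le> length v \<and> take (length u) (drop m (rev v)) = rev u then 1 else 0)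
          * xz_series n (m + length u) (r + length u * length v) M)"
proof (induction u)
  case Nil
  then show ?case using m by (simp add: fa_act_one)
next
  case (Cons a u)
  let ?L = "length v"
  let ?ok = "\<lambda>u. m + length u \<le> ?L \<and> take (length u) (drop m (rev v)) = rev u"
  have "fa_prod (map (shift v) u) \<in> FA n" by (intro FA_prod) (auto intro: shift_FA)
  then have "fa_act rho (fa_prod (map (shift v) (a # u))) (xz_series n m r)
      = fa_act rho (shift v a) (fa_act rho (fa_prod (map (shift v) u)) (xz_series n m r))"
    using shift_FA by (simp add: fa_act_mult finite_supp_FA[of _ n] series_linear_rho)
  also have "\<dots> = (\<lambda>M. (if ?ok u then 1 else 0)
      * fa_act rho (shift v a) (xz_series n (m + length u) (r + length u * ?L)) M)"
    unfolding Cons.IH by (rule series_linear_scale[OF series_linear_fa_act[OF series_linear_rho]])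
  also have "\<dots> = (\<lambda>M. (if ?ok (a # u) then 1 else 0)
      * xz_series n (m + length (a # u)) (r + length (a # u) * ?L) M)"
  proof (cases "?ok u")
    case True
    then have "(m + length u < ?L \<and> rev v ! (m + length u) = a) \<longleftrightarrow> ?ok (a # u)"
      by (auto simp: take_Suc_conv_app_nth nth_drop)
    moreover have "m + length u \<le> ?L" using True by simp
    ultimately show ?thesis using True by (simp add: fa_act_shift algebra_simps)
  next
    case False
    have nok: "\<not> ?ok (a # u)"
    proof
      assume ok: "?ok (a # u)"
      then have "take (length u) (take (length (a # u)) (drop m (rev v))) = take (length u) (rev (a # u))"
        by simp
      then have "take (length u) (drop m (rev v)) = rev u" by (simp add: min_def)
      then show False using False ok by simp
    qed
    show ?thesis unfolding if_not_P[OF False] if_not_P[OF nok] by simp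
  qed
  finally show ?case .
qed

lemma fa_act_shift_word_coeff:
  "fa_act rho (fa_prod (map (shift v) u)) one_series (xz_monom n (length v) (length v * length v))
    = (if u = v then 1 else 0)"
proof -
  have "fa_act rho (fa_prod (map (shift v) u)) one_series (xz_monom n (length v) (length v * length v))
      = (if length u \<le> length v \<and> take (length u) (rev v) = rev u then 1 else 0)
        * xz_series n (length u) (length u * length v) (xz_monom n (length v) (length v * length v))"
    unfolding one_series_eq_xz_series[of n] using fa_act_shift_word[of 0 v u 0] by simp
  also have "\<dots> = (if u = v then 1 else 0)"
    by (cases "length u = length v") (auto simp: xz_series_def xz_monom_eq_iff)
  finally show ?thesis .
qed

lemma quot_norm_nc_eval_shift_pos:
  assumes fin: "finite {v. P v \<noteq> 0}" and v: "P v \<noteq> 0"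
  shows "0 < quot_norm c n (nc_eval P (shift v))"
proof (rule quot_norm_pos)
  have prod_FA: "fa_prod (map (shift v) u) \<in> FA n" for u
    by (intro FA_prod) (auto intro: shift_FA)
  then show "nc_eval P (shift v) \<in> FA n"
    unfolding nc_eval_def by (intro FA_lincomb fin) auto
  have "fa_act rho (nc_eval P (shift v)) one_series (xz_monom n (length v) (length v * length v))
      = (\<Sum>u\<in>{v. P v \<noteq> 0}. P u * (if u = v then 1 else 0))"
    unfolding nc_eval_def
    by (simp add: fa_act_lincomb[OF fin] finite_supp_FA[OF prod_FA] fa_act_shift_word_coeff)
  also have "\<dots> = P v" using fin v by (simp add: if_distrib[of "\<lambda>x. _ * x"] sum.delta cong: if_cong)
  finally show "fa_act rho (nc_eval P (shift v)) one_series (xz_monom n (length v) (length v * length v)) \<noteq> 0"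
    using v by simp
qed

end

lemma not_completion_PI_if_no_identity:
  assumes "p (\<lambda>_. 0) = 0"
    and "\<And>P. finite {v. P v \<noteq> 0} \<Longrightarrow> P \<noteq> (\<lambda>_. 0) \<Longrightarrow> \<exists>b. (\<forall>i. b i \<in> FA n) \<and> p (nc_eval P b) \<noteq> 0"
  shows "\<not> completion_PI n p"
proof
  assume "completion_PI n p"
  then obtain P where "finite {v. P v \<noteq> 0}" "P \<noteq> (\<lambda>_. 0)"
    and lim: "\<And>s. (\<forall>i. p_cauchy n p (s i)) \<Longrightarrow> (\<lambda>k. p (nc_eval P (\<lambda>i. s i k))) \<longlonglongrightarrow> 0"
    unfolding completion_PI_def by blast
  then obtain b where b: "\<forall>i. b i \<in> FA n" and nz: "p (nc_eval P b) \<noteq> 0"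
    using assms(2) by blast
  have "p_cauchy n p (\<lambda>k. b i)" for i
    using b assms(1) by (simp add: p_cauchy_def fa_diff_def)
  then have "(\<lambda>k. p (nc_eval P b)) \<longlonglongrightarrow> 0"
    using lim[of "\<lambda>i k. b i"] by simp
  then show False using nz by (simp add: LIMSEQ_const_iff)
qed

theorem proposition4:
  fixes c :: "nat \<Rightarrow> nat \<Rightarrow> nat \<Rightarrow> complex" and n :: nat
  assumes "is_lie_algebra c n"
    and "lie_nilpotent c n"
    and "\<not> lie_abelian c n"
  shows "\<exists>p. ue_prenorm c n p \<and> \<not> completion_PI n p"
proof -
  obtain f i0 j0 where f: "i0 < n" "j0 < n" "(\<Sum>k<n. c i0 j0 k * f k) = 1"
    "\<forall>a i j. a < n \<longrightarrow> i < n \<longrightarrow> j < n \<longrightarrow> (\<Sum>y<n. c i j y * (\<Sum>m<n. c a y m * f m)) = 0"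
    using functional_vanishing_on_triple_brackets[OF assms(2,3)] by blast
  interpret lie_functional c n f i0 j0
  proof
    show "\<And>i j k. i < n \<Longrightarrow> j < n \<Longrightarrow> k < n \<Longrightarrow> c j i k = - c i j k"
      by (rule structure_constants_skew[OF assms(1)])
  qed (use f in auto)
  have "\<not> completion_PI n (quot_norm c n)"
  proof (rule not_completion_PI_if_no_identity)
    show "quot_norm c n (\<lambda>_. 0) = 0" by (rule quot_norm_zero)
  next
    fix P :: fa assume fin: "finite {v. P v \<noteq> 0}" and "P \<noteq> (\<lambda>_. 0)"
    then obtain v where "P v \<noteq> 0" by auto
    then have "quot_norm c n (nc_eval P (shift v)) \<noteq> 0"
      using quot_norm_nc_eval_shift_pos[OF fin] by (simp add: order_less_imp_not_eq2)
    then show "\<exists>b. (\<forall>i. b i \<in> FA n) \<and> quot_norm c n (nc_eval P b) \<noteq> 0"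
      using shift_FA by blast
  qed
  then show ?thesis using ue_prenorm_quot_norm by blast
qed

end
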